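(* Fix a realization of the objects described in the context, and let $U$ be the operator defined there. The eigenvalues of $U$ are $0$ and all nonzero integer multiples of $2i\pi/\lambda_k$ for the indices $k$ with $\lambda_k>0$. The eigenspace for the eigenvalue $0$ consists of all functions $f:E\to\mathbb{C}$ such that $x\sim_\sigma y$ implies $f(x)=f(y)$. For $a\in\mathbb{R}\setminus\{0\}$, the eigenspace for the eigenvalue $ai$ consists of all functions $f$ such that $f(x)=0$ whenever $\lambda(x)=0$ or $\lambda(x)$ is not a multiple of $2\pi/a$, and such that for every $x$ with $\lambda(x)$ nonzero and a multiple of $2\pi/a$, the restriction of $f$ to the class of $x$ for $\sim_\sigma$ is proportional to $y\mapsto e^{ai\delta(x,y)}$. Consequently the eigenspace for $0$ has dimension equal to the number of indices $k\ge1$ with $\lambda_k>0$ if $\sum_{k\ge1}\lambda_k=1$, and infinite dimension if $\sum_{k\ge1}\lambda_k<1$; for $a\in\mathbb{R}\setminus\{0\}$ the eigenspace for $ia$ has dimension equal to the number of indices $k\ge1$ such that $\lambda_k$ is a nonzero multiple of $2\pi/a$, in particular it is finite.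
   Context: $E$ is a countable set and $\sigma$ a random virtual permutation of $E$ (a family $(\sigma_I)$ over finite $I\subset E$, $\sigma_I$ a permutation of $I$, with $\sigma_I(x)=\sigma_J^m(x)$, $m\ge1$ minimal with $\sigma_J^m(x)\in I$, for $I\subset J$) with central law (each $\sigma_I$ has conjugation-invariant law). $x\sim_\sigma y$ iff $x,y$ lie in a common cycle of $\sigma_I$ for some (equivalently every) finite $I\ni x,y$; $\mathcal{C}_\sigma(x)$ its class. $\lambda(x)$ is the limit of $|I\cap\mathcal{C}_\sigma(x)|/|I|$ as $|I|\to\infty$; $\lambda_k$ is the supremum of $\min_{j\le k}\lambda(x_j)$ over pairwise non-equivalent $x_1,\dots,x_k$ (non-increasing, $\sum\lambda_k\le1$). For $x\sim_\sigma y$, $\delta(x,y)\in\mathbb{R}/\lambda(x)\mathbb{Z}$ is the class mod $\lambda(x)$ of the limit $\Delta(x,y)$ of $k_I(x,y)/|I|$, where $k_I(x,y)\in\{0,\dots,|I\cap\mathcal{C}_\sigma(x)|-1\}$ satisfies $\sigma_I^{k_I(x,y)}(x)=y$. Metric $d$ on $E$: $d(x,y)=1$ if $x\not\sim_\sigma y$, else $\inf\{|a|:a\equiv\delta(x,y)\bmod\lambda(x)\}$; $(\widehat E,\widehat d)$ its completion. Almost surely: these are well defined; $\lambda(x)>0$ iff $x$ is not a fixed point of $\sigma$; $\lambda,\sim_\sigma,\delta$ extend uniquely and continuously to $\widehat\lambda,\widehat\sim_\sigma,\widehat\delta$ on $\widehat E$; each class of $\widehat\sim_\sigma$ containing a non-fixed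 point is isometric to a circle of perimeter $\lambda_k$ for some $k$, each $k$ with $\lambda_k>0$ occurring exactly once, and the remaining points are singleton classes with $\widehat\lambda=0$ (countably infinitely many if $\sum\lambda_k<1$, none otherwise); there is a unique family $(S^\alpha)_{\alpha\in\mathbb{R}}$ of bijective isometries of $\widehat E$ with $S^\alpha(x)\,\widehat\sim_\sigma\,x$, $\widehat\delta(x,S^\alpha(x))=\alpha$ mod $\widehat\lambda(x)$ when $\widehat\lambda(x)>0$, $S^\alpha(x)=x$ when $\widehat\lambda(x)=0$, and $S^{\alpha+\beta}=S^\alpha S^\beta$. Fix a realization on this event. A function $f:E\to\mathbb{C}$ is continuous if it extends continuously (uniquely) to $\widehat f:\widehat E\to\mathbb{C}$; $T^\alpha f$ is the restriction to $E$ of $\widehat f\circ S^\alpha$. A continuous $f$ is continuously differentiable if there is a (necessarily unique) continuous $Uf:E\to\mathbb{C}$ with $(\widehat{T^\alpha f}(x)-\widehat f(x))/\alpha\to\widehat{Uf}(x)$ as $\alpha\to0$ for every $x\in\widehat E$; $U$ is a linear operator on this space. An eigenvalue of $U$ is $b\in\mathbb{C}$ such that $Uf=bf$ for some nonzero continuously differentiable $f$; the eigenspace is the set of such $f$ (with $0$). *)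

theory Defs
  imports "HOL-Analysis.Analysis" "HOL-Combinatorics.Permutations"
begin

definition virtual_perm :: "'a set \<Rightarrow> ('a set \<Rightarrow> 'a \<Rightarrow> 'a) \<Rightarrow> bool" where
  "virtual_perm E \<sigma> \<longleftrightarrow>
     (\<forall>I. finite I \<and> I \<subseteq> E \<longrightarrow> \<sigma> I permutes I) \<and>
     (\<forall>I J x. finite J \<and> J \<subseteq> E \<and> I \<subseteq> J \<and> x \<in> I \<longrightarrow>
        \<sigma> I x = (\<sigma> J ^^ (LEAST m. m \<ge> 1 \<and> (\<sigma> J ^^ m) x \<in> I)) x)"

definition vsim :: "'a set \<Rightarrow> ('a set \<Rightarrow> 'a \<Rightarrow> 'a) \<Rightarrow> 'a \<Rightarrow> 'a \<Rightarrow> bool" where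
  "vsim E \<sigma> x y \<longleftrightarrow> x \<in> E \<and> y \<in> E \<and>
     (\<exists>I n. finite I \<and> I \<subseteq> E \<and> x \<in> I \<and> y \<in> I \<and> (\<sigma> I ^^ n) x = y)"

definition vcls :: "'a set \<Rightarrow> ('a set \<Rightarrow> 'a \<Rightarrow> 'a) \<Rightarrow> 'a \<Rightarrow> 'a set" where
  "vcls E \<sigma> x = {y. vsim E \<sigma> x y}"

definition vfixed :: "'a set \<Rightarrow> ('a set \<Rightarrow> 'a \<Rightarrow> 'a) \<Rightarrow> 'a \<Rightarrow> bool" where
  "vfixed E \<sigma> x \<longleftrightarrow> x \<in> E \<and> (\<forall>I. finite I \<and> I \<subseteq> E \<and> x \<in> I \<longrightarrow> \<sigma> I x = x)"

text \<open>The finite sets I along which |I| tends to infinity: the first n elements of a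
fixed enumeration of E.\<close>
definition Iset :: "(nat \<Rightarrow> 'a) \<Rightarrow> nat \<Rightarrow> 'a set" where
  "Iset enum n = enum ` {..<n}"

definition lam_seq :: "'a set \<Rightarrow> (nat \<Rightarrow> 'a) \<Rightarrow> ('a set \<Rightarrow> 'a \<Rightarrow> 'a) \<Rightarrow> 'a \<Rightarrow> nat \<Rightarrow> real" where
  "lam_seq E enum \<sigma> x n =
     real (card (Iset enum n \<inter> vcls E \<sigma> x)) / real (card (Iset enum n))"

definition lam :: "'a set \<Rightarrow> (nat \<Rightarrow> 'a) \<Rightarrow> ('a set \<Rightarrow> 'a \<Rightarrow> 'a) \<Rightarrow> 'a \<Rightarrow> real" where
  "lam E enum \<sigma> x = lim (lam_seq E enum \<sigma> x)"

definition kI :: "('a set \<Rightarrow> 'a \<Rightarrow> 'a) \<Rightarrow> 'a set \<Rightarrow> 'a \<Rightarrow> 'a \<Rightarrow> nat" where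
  "kI \<sigma> I x y = (LEAST k. (\<sigma> I ^^ k) x = y)"

definition Delta_seq :: "(nat \<Rightarrow> 'a) \<Rightarrow> ('a set \<Rightarrow> 'a \<Rightarrow> 'a) \<Rightarrow> 'a \<Rightarrow> 'a \<Rightarrow> nat \<Rightarrow> real" where
  "Delta_seq enum \<sigma> x y n = real (kI \<sigma> (Iset enum n) x y) / real (card (Iset enum n))"

text \<open>Delta(x,y); delta(x,y) is its class modulo lambda(x).\<close>
definition Delta :: "(nat \<Rightarrow> 'a) \<Rightarrow> ('a set \<Rightarrow> 'a \<Rightarrow> 'a) \<Rightarrow> 'a \<Rightarrow> 'a \<Rightarrow> real" where
  "Delta enum \<sigma> x y = lim (Delta_seq enum \<sigma> x y)"

definition circdist :: "real \<Rightarrow> real \<Rightarrow> real" where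
  "circdist L t = Inf {\<bar>a\<bar> | a. \<exists>m::int. a = t + of_int m * L}"

definition vdist :: "'a set \<Rightarrow> (nat \<Rightarrow> 'a) \<Rightarrow> ('a set \<Rightarrow> 'a \<Rightarrow> 'a) \<Rightarrow> 'a \<Rightarrow> 'a \<Rightarrow> real" where
  "vdist E enum \<sigma> x y =
     (if vsim E \<sigma> x y then circdist (lam E enum \<sigma> x) (Delta enum \<sigma> x y) else 1)"

text \<open>lambda_k (k \<ge> 1): supremum of min lambda over k pairwise non-equivalent points
(0 is added to the set so that the supremum of an empty family is 0).\<close>
definition lamk :: "'a set \<Rightarrow> (nat \<Rightarrow> 'a) \<Rightarrow> ('a set \<Rightarrow> 'a \<Rightarrow> 'a) \<Rightarrow> nat \<Rightarrow> real" where
  "lamk E enum \<sigma> k = Sup ({0} \<union>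
     {Min (lam E enum \<sigma> ` set xs) | xs. length xs = k \<and> set xs \<subseteq> E \<and>
        (\<forall>i<k. \<forall>j<k. i \<noteq> j \<longrightarrow> \<not> vsim E \<sigma> (xs ! i) (xs ! j))})"

definition is_completion :: "'a set \<Rightarrow> ('a \<Rightarrow> 'a \<Rightarrow> real) \<Rightarrow> 'a set \<Rightarrow> ('a \<Rightarrow> 'a \<Rightarrow> real) \<Rightarrow> bool" where
  "is_completion E d Ehat dhat \<longleftrightarrow>
     Metric_space Ehat dhat \<and> Metric_space.mcomplete Ehat dhat \<and> E \<subseteq> Ehat \<and>
     (\<forall>x\<in>E. \<forall>y\<in>E. dhat x y = d x y) \<and>
     (\<forall>x\<in>Ehat. \<forall>e>0. \<exists>y\<in>E. dhat x y < e)"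

definition seqs_to :: "'a set \<Rightarrow> ('a \<Rightarrow> 'a \<Rightarrow> real) \<Rightarrow> 'a \<Rightarrow> (nat \<Rightarrow> 'a) set" where
  "seqs_to E dhat x = {xs. (\<forall>n. xs n \<in> E) \<and> (\<lambda>n. dhat (xs n) x) \<longlonglongrightarrow> 0}"

context
  fixes E :: "'a set" and enum :: "nat \<Rightarrow> 'a" and \<sigma> :: "'a set \<Rightarrow> 'a \<Rightarrow> 'a"
    and Ehat :: "'a set" and dhat :: "'a \<Rightarrow> 'a \<Rightarrow> real"
begin

definition lamhat :: "'a \<Rightarrow> real" where
  "lamhat x = lim (\<lambda>n. lam E enum \<sigma> ((SOME xs. xs \<in> seqs_to E dhat x) n))"

definition simhat :: "'a \<Rightarrow> 'a \<Rightarrow> bool" where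
  "simhat x y \<longleftrightarrow> (\<forall>xs\<in>seqs_to E dhat x. \<forall>ys\<in>seqs_to E dhat y.
      eventually (\<lambda>n. vsim E \<sigma> (xs n) (ys n)) sequentially)"

text \<open>A representative of deltahat(x,y) (a class modulo lamhat x).\<close>
definition Deltahat :: "'a \<Rightarrow> 'a \<Rightarrow> real" where
  "Deltahat x y = (SOME D. \<forall>xs\<in>seqs_to E dhat x. \<forall>ys\<in>seqs_to E dhat y.
      (\<lambda>n. circdist (lam E enum \<sigma> (xs n)) (Delta enum \<sigma> (xs n) (ys n) - D)) \<longlonglongrightarrow> 0)"

text \<open>The almost sure facts that lambda, sim and delta extend continuously.\<close>
definition extensions_exist :: bool where
  "extensions_exist \<longleftrightarrow>
     (\<forall>x\<in>Ehat. \<exists>L. \<forall>xs\<in>seqs_to E dhat x. (\<lambda>n. lam E enum \<sigma> (xs n)) \<longlonglongrightarrow> L) \<and>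
     (\<forall>x\<in>Ehat. \<forall>y\<in>Ehat.
        (\<forall>xs\<in>seqs_to E dhat x. \<forall>ys\<in>seqs_to E dhat y.
            eventually (\<lambda>n. vsim E \<sigma> (xs n) (ys n)) sequentially) \<or>
        (\<forall>xs\<in>seqs_to E dhat x. \<forall>ys\<in>seqs_to E dhat y.
            eventually (\<lambda>n. \<not> vsim E \<sigma> (xs n) (ys n)) sequentially)) \<and>
     (\<forall>x\<in>Ehat. \<forall>y\<in>Ehat. simhat x y \<and> lamhat x > 0 \<longrightarrow>
        (\<exists>D. \<forall>xs\<in>seqs_to E dhat x. \<forall>ys\<in>seqs_to E dhat y.
          (\<lambda>n. circdist (lam E enum \<sigma> (xs n)) (Delta enum \<sigma> (xs n) (ys n) - D)) \<longlonglongrightarrow> 0))"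

definition hatcls :: "'a \<Rightarrow> 'a set" where
  "hatcls x = {y \<in> Ehat. simhat x y}"

definition isometric_circle :: "'a set \<Rightarrow> real \<Rightarrow> bool" where
  "isometric_circle C L \<longleftrightarrow> (\<exists>\<phi>. bij_betw \<phi> C {0..<L} \<and>
      (\<forall>x\<in>C. \<forall>y\<in>C. dhat x y = circdist L (\<phi> x - \<phi> y)))"

text \<open>The almost sure description of the classes of the completion.\<close>
definition class_structure :: bool where
  "class_structure \<longleftrightarrow>
     (let K = {k. k \<ge> 1 \<and> lamk E enum \<sigma> k > 0} in
      (\<exists>c. (\<forall>k\<in>K. c k \<in> Ehat \<and> lamhat (c k) = lamk E enum \<sigma> k \<and>
                    isometric_circle (hatcls (c k)) (lamk E enum \<sigma> k)) \<and>
           inj_on (\<lambda>k. hatcls (c k)) K \<and>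
           (\<forall>x\<in>Ehat. lamhat x > 0 \<longrightarrow> (\<exists>k\<in>K. x \<in> hatcls (c k))))) \<and>
     (\<forall>x\<in>Ehat. lamhat x \<ge> 0) \<and>
     (\<forall>x\<in>Ehat. lamhat x = 0 \<longrightarrow> hatcls x = {x}) \<and>
     ((\<exists>s<1. (\<lambda>k. lamk E enum \<sigma> (Suc k)) sums s) \<longrightarrow>
        countable {x\<in>Ehat. lamhat x = 0} \<and> infinite {x\<in>Ehat. lamhat x = 0}) \<and>
     ((\<lambda>k. lamk E enum \<sigma> (Suc k)) sums 1 \<longrightarrow> {x\<in>Ehat. lamhat x = 0} = {})"

definition is_flow :: "(real \<Rightarrow> 'a \<Rightarrow> 'a) \<Rightarrow> bool" where
  "is_flow S \<longleftrightarrow>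
     (\<forall>\<alpha>. bij_betw (S \<alpha>) Ehat Ehat \<and>
          (\<forall>x\<in>Ehat. \<forall>y\<in>Ehat. dhat (S \<alpha> x) (S \<alpha> y) = dhat x y)) \<and>
     (\<forall>\<alpha> \<beta>. \<forall>x\<in>Ehat. S (\<alpha> + \<beta>) x = S \<alpha> (S \<beta> x)) \<and>
     (\<forall>\<alpha>. \<forall>x\<in>Ehat.
        (lamhat x = 0 \<longrightarrow> S \<alpha> x = x) \<and>
        (lamhat x > 0 \<longrightarrow> simhat x (S \<alpha> x) \<and>
            circdist (lamhat x) (Deltahat x (S \<alpha> x) - \<alpha>) = 0))"

definition contin_hat :: "('a \<Rightarrow> complex) \<Rightarrow> bool" where
  "contin_hat g \<longleftrightarrow> (\<forall>x\<in>Ehat. \<forall>e>0. \<exists>\<delta>>0. \<forall>y\<in>Ehat.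
      dhat x y < \<delta> \<longrightarrow> cmod (g y - g x) < e)"

definition is_ext :: "('a \<Rightarrow> complex) \<Rightarrow> ('a \<Rightarrow> complex) \<Rightarrow> bool" where
  "is_ext f g \<longleftrightarrow> contin_hat g \<and> (\<forall>x\<in>E. g x = f x)"

definition vcont :: "('a \<Rightarrow> complex) \<Rightarrow> bool" where
  "vcont f \<longleftrightarrow> (\<exists>g. is_ext f g)"

definition fhat :: "('a \<Rightarrow> complex) \<Rightarrow> 'a \<Rightarrow> complex" where
  "fhat f = (SOME g. is_ext f g)"

text \<open>Functions E to C, represented as functions vanishing outside E.\<close>
definition FE :: "('a \<Rightarrow> complex) set" where
  "FE = {f. \<forall>x. x \<notin> E \<longrightarrow> f x = 0}"

definition Tflow :: "(real \<Rightarrow> 'a \<Rightarrow> 'a) \<Rightarrow> real \<Rightarrow> ('a \<Rightarrow> complex) \<Rightarrow> 'a \<Rightarrow> complex" where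
  "Tflow S \<alpha> f = (\<lambda>x. if x \<in> E then fhat f (S \<alpha> x) else 0)"

text \<open>has_U S f u: f is continuously differentiable with U f = u (on E).\<close>
definition has_U :: "(real \<Rightarrow> 'a \<Rightarrow> 'a) \<Rightarrow> ('a \<Rightarrow> complex) \<Rightarrow> ('a \<Rightarrow> complex) \<Rightarrow> bool" where
  "has_U S f u \<longleftrightarrow> vcont f \<and> vcont u \<and>
     (\<forall>x\<in>Ehat. ((\<lambda>\<alpha>. (fhat (Tflow S \<alpha> f) x - fhat f x) / complex_of_real \<alpha>)
                  \<longlongrightarrow> fhat u x) (at 0))"

definition eigenspace :: "(real \<Rightarrow> 'a \<Rightarrow> 'a) \<Rightarrow> complex \<Rightarrow> ('a \<Rightarrow> complex) set" where
  "eigenspace S b = {f \<in> FE. \<exists>u. has_U S f u \<and> (\<forall>x\<in>E. u x = b * f x)}"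

definition is_eigenvalue :: "(real \<Rightarrow> 'a \<Rightarrow> 'a) \<Rightarrow> complex \<Rightarrow> bool" where
  "is_eigenvalue S b \<longleftrightarrow> (\<exists>f\<in>eigenspace S b. \<exists>x\<in>E. f x \<noteq> 0)"

end

definition lin_indep :: "('a \<Rightarrow> complex) set \<Rightarrow> bool" where
  "lin_indep B \<longleftrightarrow> finite B \<and>
     (\<forall>c. (\<forall>x. (\<Sum>b\<in>B. c b * b x) = 0) \<longrightarrow> (\<forall>b\<in>B. c b = 0))"

definition lin_span :: "('a \<Rightarrow> complex) set \<Rightarrow> ('a \<Rightarrow> complex) set" where
  "lin_span B = {f. \<exists>c. f = (\<lambda>x. \<Sum>b\<in>B. c b * b x)}"

definition has_dim :: "('a \<Rightarrow> complex) set \<Rightarrow> nat \<Rightarrow> bool" where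
  "has_dim V n \<longleftrightarrow> (\<exists>B\<subseteq>V. lin_indep B \<and> card B = n \<and> lin_span B = V)"

definition infinite_dim :: "('a \<Rightarrow> complex) set \<Rightarrow> bool" where
  "infinite_dim V \<longleftrightarrow> (\<forall>n. \<exists>B\<subseteq>V. lin_indep B \<and> card B = n)"

definition dim_eq_card :: "('a \<Rightarrow> complex) set \<Rightarrow> 'b set \<Rightarrow> bool" where
  "dim_eq_card V K \<longleftrightarrow> (finite K \<longrightarrow> has_dim V (card K)) \<and> (infinite K \<longrightarrow> infinite_dim V)"

end

theory Submission
  imports Defs
begin

text \<open>
  Along the flow, an eigenfunction f of U with eigenvalue b satisfies
  fhat (S t x) = exp (b t) fhat x, because t \<mapsto> fhat (S t x) solves g' = b g. The flow fixes
  the points with lambda = 0 and turns every circle of perimeter lambda_k with period lambda_k,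
  so b f vanishes at fixed points and exp (b lambda_k) = 1 wherever f is nonzero on that circle.
  Moving from x to y in a class of E takes time delta(x, y), so for b = i a the restriction of
  f to a class is proportional to exp (i a delta(x, -)). Conversely, a function of this shape
  extends continuously to the completion (on a circle it is Lipschitz for the circle metric) and
  is differentiable along the flow with derivative i a f. Hence the eigenspace for i a has a
  basis of such functions, each supported on one class: one per circle whose perimeter is a
  multiple of 2 pi / a, and additionally one per fixed point when a = 0. For a \<noteq> 0 there are
  finitely many such circles, since their perimeters are at least 2 pi / |a| and sum to at most 1.
\<close>

section \<open>Orbits of permutations of finite sets\<close>

lemma inj_funpow_cancel:
  assumes "inj p" "u \<le> v" "(p ^^ u) x = (p ^^ v) x" shows "(p ^^ (v - u)) x = x"
proof -
  have "(p ^^ u) ((p ^^ (v - u)) x) = (p ^^ (u + (v - u))) x"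
    by (simp only: funpow_add o_apply)
  then have "(p ^^ u) ((p ^^ (v - u)) x) = (p ^^ u) x"
    using assms(2,3) by simp
  then show ?thesis using inj_fn[OF assms(1), of u] by (simp add: inj_eq)
qed

lemma permutes_funpow_returns:
  assumes p: "p permutes J" and J: "finite J" and x: "x \<in> J"
  shows "\<exists>n>0. (p ^^ n) x = x"
proof -
  have inJ: "(p ^^ k) x \<in> J" for k
    by (induction k) (auto simp: x permutes_in_image[OF p])
  have "\<not> inj_on (\<lambda>k. (p ^^ k) x) {..card J}"
  proof
    assume "inj_on (\<lambda>k. (p ^^ k) x) {..card J}"
    then have "card ((\<lambda>k. (p ^^ k) x) ` {..card J}) = Suc (card J)"
      by (simp add: card_image)
    moreover have "(\<lambda>k. (p ^^ k) x) ` {..card J} \<subseteq> J" using inJ by auto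
    ultimately show False using card_mono[OF J] by (metis Suc_n_not_le_n)
  qed
  then obtain i j where "i \<noteq> j" "(p ^^ i) x = (p ^^ j) x"
    unfolding inj_on_def by blast
  then obtain i j where ij: "i < j" "(p ^^ i) x = (p ^^ j) x"
    by (metis linorder_neqE_nat)
  then have "(p ^^ (j - i)) x = x"
    using inj_funpow_cancel[OF permutes_inj[OF p]] by simp
  then show ?thesis using ij by (intro exI[of _ "j - i"]) simp
qed

lemma funpow_eq_iff_mod_period:
  assumes "inj p" and P: "P > 0" "(p ^^ P) x = x"
    and P_min: "\<And>n. 0 < n \<Longrightarrow> n < P \<Longrightarrow> (p ^^ n) x \<noteq> x"
  shows "(p ^^ i) x = (p ^^ j) x \<longleftrightarrow> i mod P = j mod P"
proof -
  have no_repeat: "(p ^^ u) x \<noteq> (p ^^ v) x" if "u < v" "v < P" for u v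
    using inj_funpow_cancel[OF assms(1), of u v x] P_min[of "v - u"] that by auto
  have "(p ^^ i) x = (p ^^ j) x \<longleftrightarrow> (p ^^ (i mod P)) x = (p ^^ (j mod P)) x"
    by (simp add: funpow_mod_eq[OF P(2)])
  also have "\<dots> \<longleftrightarrow> i mod P = j mod P"
  proof
    assume h: "(p ^^ (i mod P)) x = (p ^^ (j mod P)) x"
    have "i mod P < P" "j mod P < P" using P(1) by auto
    then show "i mod P = j mod P"
      using h no_repeat[of "i mod P" "j mod P"] no_repeat[of "j mod P" "i mod P"]
      by (cases "i mod P < j mod P"; cases "j mod P < i mod P") auto
  qed simp
  finally show ?thesis .
qed

lemma permutes_orbit:
  assumes p: "p permutes J" and J: "finite J" and x: "x \<in> J"
  defines "Orb \<equiv> range (\<lambda>k. (p ^^ k) x)"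
  shows "card Orb > 0" "(p ^^ card Orb) x = x"
    and "\<And>i j. (p ^^ i) x = (p ^^ j) x \<longleftrightarrow> i mod card Orb = j mod card Orb"
proof -
  define P where "P = (LEAST n. n > 0 \<and> (p ^^ n) x = x)"
  have P: "P > 0" "(p ^^ P) x = x"
    using LeastI_ex[OF permutes_funpow_returns[OF p J x]] unfolding P_def by auto
  have "(p ^^ n) x \<noteq> x" if "0 < n" "n < P" for n
    using that not_less_Least unfolding P_def by blast
  note eq_iff = funpow_eq_iff_mod_period[OF permutes_inj[OF p] P this]
  have "Orb = (\<lambda>k. (p ^^ k) x) ` {..<P}"
  proof
    show "Orb \<subseteq> (\<lambda>k. (p ^^ k) x) ` {..<P}"
    proof
      fix y assume "y \<in> Orb"
      then obtain k where "y = (p ^^ k) x" unfolding Orb_def by auto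
      then have "y = (p ^^ (k mod P)) x" by (simp add: funpow_mod_eq[OF P(2)])
      then show "y \<in> (\<lambda>k. (p ^^ k) x) ` {..<P}" using P(1) by auto
    qed
  qed (auto simp: Orb_def)
  moreover have "inj_on (\<lambda>k. (p ^^ k) x) {..<P}"
    by (intro inj_onI) (simp add: eq_iff)
  ultimately have "card Orb = P" by (simp add: card_image)
  then show "card Orb > 0" "(p ^^ card Orb) x = x"
    and "\<And>i j. (p ^^ i) x = (p ^^ j) x \<longleftrightarrow> i mod card Orb = j mod card Orb"
    using P eq_iff by auto
qed

lemma permutes_orbit_Least:
  assumes p: "p permutes J" and J: "finite J" and x: "x \<in> J"
    and y: "y \<in> range (\<lambda>k. (p ^^ k) x)"
  shows "(p ^^ (LEAST k. (p ^^ k) x = y)) x = y"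
    and "(LEAST k. (p ^^ k) x = y) < card (range (\<lambda>k. (p ^^ k) x))"
proof -
  let ?N = "card (range (\<lambda>k. (p ^^ k) x))"
  obtain k where k: "(p ^^ k) x = y" using y by auto
  then have k': "(p ^^ (k mod ?N)) x = y"
    using permutes_orbit(3)[OF p J x, of "k mod ?N" k] by simp
  show "(p ^^ (LEAST k. (p ^^ k) x = y)) x = y" by (rule LeastI[of _ k]) (rule k)
  have "(LEAST k. (p ^^ k) x = y) \<le> k mod ?N" by (rule Least_le) (rule k')
  also have "\<dots> < ?N" using permutes_orbit(1)[OF p J x] by simp
  finally show "(LEAST k. (p ^^ k) x = y) < ?N" .
qed

lemma first_return_funpow:
  assumes p: "p permutes K" and K: "finite K" and IK: "I \<subseteq> K"
    and r: "\<And>z. z \<in> I \<Longrightarrow> r z = (p ^^ (LEAST m. m \<ge> 1 \<and> (p ^^ m) z \<in> I)) z"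
  shows "x \<in> I \<Longrightarrow> (p ^^ m) x \<in> I \<Longrightarrow> \<exists>j. (r ^^ j) x = (p ^^ m) x"
proof (induction m arbitrary: x rule: less_induct)
  case (less m)
  show ?case
  proof (cases "m = 0")
    case True then show ?thesis by (intro exI[of _ 0]) simp
  next
    case False
    define m1 where "m1 = (LEAST m. m \<ge> 1 \<and> (p ^^ m) x \<in> I)"
    have m1: "m1 \<ge> 1" "(p ^^ m1) x \<in> I" "m1 \<le> m"
      using LeastI[of "\<lambda>m. m \<ge> 1 \<and> (p ^^ m) x \<in> I" m] Least_le[of "\<lambda>m. m \<ge> 1 \<and> (p ^^ m) x \<in> I" m]
        False less.prems unfolding m1_def by auto
    have rx: "r x = (p ^^ m1) x" using r[OF less.prems(1)] m1_def by simp
    have "(p ^^ m) x = (p ^^ ((m - m1) + m1)) x" using m1 by simp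
    then have eq: "(p ^^ m) x = (p ^^ (m - m1)) (r x)"
      using rx by (simp only: funpow_add o_apply)
    obtain j where "(r ^^ j) (r x) = (p ^^ m) x"
      using less.IH[of "m - m1" "r x"] m1 rx eq less.prems by auto
    then show ?thesis by (intro exI[of _ "Suc j"]) (simp only: funpow_Suc_right o_apply)
  qed
qed

section \<open>Cycles of a virtual permutation\<close>

context
  fixes E :: "'a set" and \<sigma> :: "'a set \<Rightarrow> 'a \<Rightarrow> 'a"
  assumes vp: "virtual_perm E \<sigma>"
begin

lemma virtual_perm_permutes: "finite I \<Longrightarrow> I \<subseteq> E \<Longrightarrow> \<sigma> I permutes I"
  using vp unfolding virtual_perm_def by blast

lemma virtual_perm_first_return: "finite J \<Longrightarrow> J \<subseteq> E \<Longrightarrow> I \<subseteq> J \<Longrightarrow> x \<in> I \<Longrightarrow>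
   \<sigma> I x = (\<sigma> J ^^ (LEAST m. m \<ge> 1 \<and> (\<sigma> J ^^ m) x \<in> I)) x"
  using vp unfolding virtual_perm_def by blast

lemma virtual_perm_funpow_in: "finite I \<Longrightarrow> I \<subseteq> E \<Longrightarrow> x \<in> I \<Longrightarrow> (\<sigma> I ^^ k) x \<in> I"
  by (induction k) (auto simp: permutes_in_image[OF virtual_perm_permutes])

lemma virtual_perm_funpow_lift:
  assumes J: "finite J" "J \<subseteq> E" "I \<subseteq> J" and x: "x \<in> I"
  shows "\<exists>m. (\<sigma> I ^^ n) x = (\<sigma> J ^^ m) x"
proof (induction n)
  case 0 show ?case by (intro exI[of _ 0]) simp
next
  case (Suc n)
  then obtain m where m: "(\<sigma> I ^^ n) x = (\<sigma> J ^^ m) x" by blast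
  have I: "finite I" "I \<subseteq> E" using J finite_subset by auto
  have zI: "(\<sigma> I ^^ n) x \<in> I" using virtual_perm_funpow_in[OF I x] .
  define l where "l = (LEAST m. m \<ge> 1 \<and> (\<sigma> J ^^ m) ((\<sigma> I ^^ n) x) \<in> I)"
  have "(\<sigma> I ^^ Suc n) x = (\<sigma> J ^^ l) ((\<sigma> J ^^ m) x)"
    using virtual_perm_first_return[OF J zI] m unfolding l_def by simp
  then show ?case by (intro exI[of _ "l + m"]) (simp add: funpow_add)
qed

lemma virtual_perm_funpow_restrict:
  assumes K: "finite K" "K \<subseteq> E" "I \<subseteq> K" and x: "x \<in> I" and y: "y \<in> I"
    and m: "(\<sigma> K ^^ m) x = y"
  shows "\<exists>j. (\<sigma> I ^^ j) x = y"
  using first_return_funpow[OF virtual_perm_permutes[OF K(1,2)] K(1) K(3), of "\<sigma> I" x m]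
    virtual_perm_first_return[OF K] x y m by auto

lemma vsim_Int_eq_orbit:
  assumes I: "finite I" "I \<subseteq> E" and x: "x \<in> I"
  shows "I \<inter> vcls E \<sigma> x = range (\<lambda>k. (\<sigma> I ^^ k) x)"
proof
  show "range (\<lambda>k. (\<sigma> I ^^ k) x) \<subseteq> I \<inter> vcls E \<sigma> x"
  proof
    fix y assume "y \<in> range (\<lambda>k. (\<sigma> I ^^ k) x)"
    then obtain k where k: "(\<sigma> I ^^ k) x = y" by auto
    have yI: "y \<in> I" using virtual_perm_funpow_in[OF I x] k by auto
    then have "vsim E \<sigma> x y" unfolding vsim_def using I x k by blast
    then show "y \<in> I \<inter> vcls E \<sigma> x" using yI unfolding vcls_def by simp
  qed
next
  show "I \<inter> vcls E \<sigma> x \<subseteq> range (\<lambda>k. (\<sigma> I ^^ k) x)"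
  proof
    fix y assume "y \<in> I \<inter> vcls E \<sigma> x"
    then have y: "y \<in> I" "vsim E \<sigma> x y" unfolding vcls_def by auto
    then obtain J n where J: "finite J" "J \<subseteq> E" "x \<in> J" "y \<in> J" "(\<sigma> J ^^ n) x = y"
      unfolding vsim_def by blast
    have K: "finite (I \<union> J)" "I \<union> J \<subseteq> E" using I J by auto
    obtain m where "(\<sigma> J ^^ n) x = (\<sigma> (I \<union> J) ^^ m) x"
      using virtual_perm_funpow_lift[OF K _ J(3)] by blast
    then have "(\<sigma> (I \<union> J) ^^ m) x = y" using J(5) by simp
    then obtain j where "(\<sigma> I ^^ j) x = y"
      using virtual_perm_funpow_restrict[OF K _ x y(1)] by blast
    then show "y \<in> range (\<lambda>k. (\<sigma> I ^^ k) x)" by auto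
  qed
qed

lemma vsim_funpow:
  assumes "vsim E \<sigma> x y" "finite I" "I \<subseteq> E" "x \<in> I" "y \<in> I"
  shows "\<exists>k. (\<sigma> I ^^ k) x = y"
proof -
  have "y \<in> I \<inter> vcls E \<sigma> x" using assms(1,5) unfolding vcls_def by simp
  then show ?thesis unfolding vsim_Int_eq_orbit[OF assms(2-4)] by auto
qed

lemma vsim_refl: "x \<in> E \<Longrightarrow> vsim E \<sigma> x x"
  unfolding vsim_def by (intro conjI exI[of _ "{x}"] exI[of _ 0]) auto

lemma vsim_in_E: "vsim E \<sigma> x y \<Longrightarrow> x \<in> E \<and> y \<in> E"
  unfolding vsim_def by auto

lemma vsim_sym:
  assumes "vsim E \<sigma> x y" shows "vsim E \<sigma> y x"
proof -
  obtain I n where I: "finite I" "I \<subseteq> E" "x \<in> I" "y \<in> I" "(\<sigma> I ^^ n) x = y"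
    using assms unfolding vsim_def by blast
  define N where "N = card (range (\<lambda>k. (\<sigma> I ^^ k) x))"
  note orbit = permutes_orbit[OF virtual_perm_permutes[OF I(1,2)] I(1,3), folded N_def]
  have "(\<sigma> I ^^ (N * n - n)) y = (\<sigma> I ^^ (N * n - n + n)) x"
    using I(5) by (simp add: funpow_add)
  also have "N * n - n + n = N * n" using orbit(1) by (simp add: le_add_diff_inverse2)
  also have "(\<sigma> I ^^ (N * n)) x = (\<sigma> I ^^ 0) x"
    using orbit(3)[of "N * n" 0] by simp
  finally have "(\<sigma> I ^^ (N * n - n)) y = x" by simp
  then show ?thesis using I unfolding vsim_def by blast
qed

lemma vsim_trans:
  assumes "vsim E \<sigma> x y" "vsim E \<sigma> y z" shows "vsim E \<sigma> x z"
proof -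
  obtain I1 where I1: "finite I1" "I1 \<subseteq> E" "x \<in> I1" "y \<in> I1"
    using assms(1) unfolding vsim_def by blast
  obtain I2 where I2: "finite I2" "I2 \<subseteq> E" "y \<in> I2" "z \<in> I2"
    using assms(2) unfolding vsim_def by blast
  have K: "finite (I1 \<union> I2)" "I1 \<union> I2 \<subseteq> E" using I1 I2 by auto
  obtain k where k: "(\<sigma> (I1 \<union> I2) ^^ k) x = y" using vsim_funpow[OF assms(1) K] I1 by auto
  obtain l where l: "(\<sigma> (I1 \<union> I2) ^^ l) y = z" using vsim_funpow[OF assms(2) K] I2 by auto
  have "(\<sigma> (I1 \<union> I2) ^^ (l + k)) x = z" using k l by (simp add: funpow_add)
  then show ?thesis using K I1 I2 assms unfolding vsim_def by blast
qed

lemma vcls_eq: "vsim E \<sigma> x y \<Longrightarrow> vcls E \<sigma> x = vcls E \<sigma> y"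
  unfolding vcls_def using vsim_sym vsim_trans by blast

lemma vcls_disjoint: "\<not> vsim E \<sigma> x y \<Longrightarrow> vcls E \<sigma> x \<inter> vcls E \<sigma> y = {}"
  unfolding vcls_def using vsim_sym vsim_trans by blast

lemma kI_funpow:
  assumes I: "finite I" "I \<subseteq> E" and x: "x \<in> I" and y: "y \<in> I" and xy: "vsim E \<sigma> x y"
  shows "(\<sigma> I ^^ kI \<sigma> I x y) x = y" "kI \<sigma> I x y < card (I \<inter> vcls E \<sigma> x)"
proof -
  have "y \<in> range (\<lambda>k. (\<sigma> I ^^ k) x)"
    using vsim_Int_eq_orbit[OF I x] y xy unfolding vcls_def by auto
  then show "(\<sigma> I ^^ kI \<sigma> I x y) x = y" "kI \<sigma> I x y < card (I \<inter> vcls E \<sigma> x)"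
    using permutes_orbit_Least[OF virtual_perm_permutes[OF I] I(1) x]
    unfolding kI_def vsim_Int_eq_orbit[OF I x] by auto
qed

lemma kI_cocycle:
  assumes I: "finite I" "I \<subseteq> E" and x: "x \<in> I" and y: "y \<in> I" and z: "z \<in> I"
    and xy: "vsim E \<sigma> x y" and yz: "vsim E \<sigma> y z"
  shows "kI \<sigma> I x y + kI \<sigma> I y z = kI \<sigma> I x z \<or>
         kI \<sigma> I x y + kI \<sigma> I y z = kI \<sigma> I x z + card (I \<inter> vcls E \<sigma> x)"
proof -
  define N where "N = card (I \<inter> vcls E \<sigma> x)"
  note orbit = permutes_orbit[OF virtual_perm_permutes[OF I] I(1) x,
      folded vsim_Int_eq_orbit[OF I x], folded N_def]
  note a = kI_funpow[OF I x y xy] and b = kI_funpow[OF I y z yz]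
    and c = kI_funpow[OF I x z vsim_trans[OF xy yz]]
  have "(\<sigma> I ^^ (kI \<sigma> I y z + kI \<sigma> I x y)) x = (\<sigma> I ^^ kI \<sigma> I x z) x"
    using a(1) b(1) c(1) by (simp add: funpow_add)
  then have m: "(kI \<sigma> I y z + kI \<sigma> I x y) mod N = kI \<sigma> I x z"
    using orbit(3) c(2) N_def by simp
  have "kI \<sigma> I x y < N" "kI \<sigma> I y z < N"
    using a(2) b(2) vcls_eq[OF xy] N_def by auto
  then show ?thesis
    using m by (cases "kI \<sigma> I y z + kI \<sigma> I x y < N") (auto simp: le_mod_geq N_def)
qed

end

section \<open>Distance to a lattice in the real line\<close>

lemma circdist_set_nonempty: "{\<bar>a\<bar> | a. \<exists>m::int. a = t + of_int m * (L::real)} \<noteq> {}"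
  by auto

lemma circdist_le: "circdist L t \<le> \<bar>t + of_int m * L\<bar>"
  unfolding circdist_def by (rule cInf_lower) (auto intro: bdd_belowI[of _ 0])

lemma circdist_nonneg: "0 \<le> circdist L t"
  unfolding circdist_def by (rule cInf_greatest[OF circdist_set_nonempty]) auto

lemma circdist_round:
  assumes L: "L > 0"
  shows "circdist L t = \<bar>t - of_int (round (t / L)) * L\<bar>"
proof (rule antisym)
  show "circdist L t \<le> \<bar>t - of_int (round (t / L)) * L\<bar>"
    using circdist_le[of L t "- round (t / L)"] by simp
next
  define q where "q = t / L"
  define r where "r = round q"
  have rq: "\<bar>of_int r - q\<bar> \<le> 1/2" unfolding r_def by (rule of_int_round_abs_le)
  have tq: "t = q * L" using L unfolding q_def by simp
  have "\<bar>t - of_int r * L\<bar> \<le> \<bar>t + of_int m * L\<bar>" for m :: int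
  proof (cases "m = - r")
    case False
    then have "1 \<le> \<bar>m + r\<bar>" by linarith
    then have "(1::real) \<le> \<bar>of_int m + of_int r\<bar>"
      by (metis of_int_1_le_iff of_int_abs of_int_add)
    then have "\<bar>q - of_int r\<bar> * L \<le> \<bar>q + of_int m\<bar> * L"
      using rq L by (intro mult_right_mono) linarith+
    moreover have "t - of_int r * L = (q - of_int r) * L" "t + of_int m * L = (q + of_int m) * L"
      unfolding tq by (simp_all add: algebra_simps)
    moreover have "\<bar>(q - of_int r) * L\<bar> = \<bar>q - of_int r\<bar> * L" "\<bar>(q + of_int m) * L\<bar> = \<bar>q + of_int m\<bar> * L"
      using L by (simp_all add: abs_mult)
    ultimately show ?thesis by simp
  qed simp
  then show "\<bar>t - of_int (round (t / L)) * L\<bar> \<le> circdist L t"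
    unfolding circdist_def r_def q_def by (intro cInf_greatest[OF circdist_set_nonempty]) auto
qed

lemma circdist_attained:
  assumes "L \<ge> 0" shows "\<exists>m::int. circdist L t = \<bar>t + of_int m * L\<bar>"
proof (cases "L = 0")
  case True then show ?thesis unfolding circdist_def by simp
next
  case False
  then show ?thesis using circdist_round[of L t] assms by (intro exI[of _ "- round (t / L)"]) simp
qed

lemma circdist_cong:
  assumes "\<And>m. \<exists>m'. \<bar>u + of_int m * L\<bar> = \<bar>t + of_int m' * L\<bar>"
    and "\<And>m. \<exists>m'. \<bar>t + of_int m * L\<bar> = \<bar>u + of_int m' * L\<bar>"
  shows "circdist L u = circdist L t"
proof -
  have "{\<bar>a\<bar> | a. \<exists>m::int. a = u + of_int m * L} = {\<bar>a\<bar> | a. \<exists>m::int. a = t + of_int m * L}"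
  proof (intro set_eqI iffI)
    fix z assume "z \<in> {\<bar>a\<bar> | a. \<exists>m::int. a = u + of_int m * L}"
    then obtain m where "z = \<bar>u + of_int m * L\<bar>" by auto
    then show "z \<in> {\<bar>a\<bar> | a. \<exists>m::int. a = t + of_int m * L}" using assms(1)[of m] by auto
  next
    fix z assume "z \<in> {\<bar>a\<bar> | a. \<exists>m::int. a = t + of_int m * L}"
    then obtain m where "z = \<bar>t + of_int m * L\<bar>" by auto
    then show "z \<in> {\<bar>a\<bar> | a. \<exists>m::int. a = u + of_int m * L}" using assms(2)[of m] by auto
  qed
  then show ?thesis unfolding circdist_def by simp
qed

lemma circdist_uminus: "circdist L (- t) = circdist L t"
proof (rule circdist_cong)
  show "\<exists>m'. \<bar>- t + of_int m * L\<bar> = \<bar>t + of_int m' * L\<bar>" for m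
    by (intro exI[of _ "- m"]) (simp add: abs_minus_commute)
  show "\<exists>m'. \<bar>t + of_int m * L\<bar> = \<bar>- t + of_int m' * L\<bar>" for m
    by (intro exI[of _ "- m"]) (simp add: abs_minus_commute)
qed

lemma circdist_add_multiple: "circdist L (t + of_int k * L) = circdist L t"
proof (rule circdist_cong)
  show "\<exists>m'. \<bar>t + of_int k * L + of_int m * L\<bar> = \<bar>t + of_int m' * L\<bar>" for m
    by (intro exI[of _ "k + m"]) (simp add: algebra_simps)
  show "\<exists>m'. \<bar>t + of_int m * L\<bar> = \<bar>t + of_int k * L + of_int m' * L\<bar>" for m
    by (intro exI[of _ "m - k"]) (simp add: algebra_simps)
qed

lemma circdist_le_half: "L > 0 \<Longrightarrow> circdist L t \<le> L / 2"
proof -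
  assume L: "L > 0"
  have "t - of_int (round (t / L)) * L = (t / L - of_int (round (t / L))) * L"
    using L by (simp add: field_simps)
  then have "\<bar>t - of_int (round (t / L)) * L\<bar> = \<bar>t / L - of_int (round (t / L))\<bar> * L"
    using L by (simp add: abs_mult abs_of_pos)
  also have "\<dots> \<le> 1/2 * L"
    using of_int_round_abs_le[of "t / L"] L by (intro mult_right_mono) (auto simp: abs_minus_commute)
  finally show ?thesis using circdist_round[OF L, of t] by simp
qed

lemma circdist_triangle:
  assumes L: "L \<ge> 0" shows "circdist L (s + t) \<le> circdist L s + circdist L t"
proof -
  obtain m1 where m1: "circdist L s = \<bar>s + of_int m1 * L\<bar>" using circdist_attained[OF L] by blast
  obtain m2 where m2: "circdist L t = \<bar>t + of_int m2 * L\<bar>" using circdist_attained[OF L] by blast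
  have "circdist L (s + t) \<le> \<bar>s + t + of_int (m1 + m2) * L\<bar>" by (rule circdist_le)
  also have "\<dots> = \<bar>(s + of_int m1 * L) + (t + of_int m2 * L)\<bar>" by (simp add: algebra_simps)
  also have "\<dots> \<le> \<bar>s + of_int m1 * L\<bar> + \<bar>t + of_int m2 * L\<bar>" by (rule abs_triangle_ineq)
  finally show ?thesis using m1 m2 by simp
qed

lemma circdist_diff_triangle:
  assumes L: "L \<ge> 0" shows "circdist L u \<le> circdist L (u - v) + circdist L v"
  using circdist_triangle[OF L, of "u - v" v] by simp

lemma circdist_eq_0_triangle:
  assumes L: "L \<ge> 0" and "circdist L (u - v) = 0" and "circdist L v = 0"
  shows "circdist L u = 0"
  using circdist_diff_triangle[OF L, of u v] circdist_nonneg[of L u] assms by simp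

lemma circdist_lipschitz:
  assumes L: "L \<ge> 0" shows "\<bar>circdist L a - circdist L b\<bar> \<le> circdist L (a - b)"
  using circdist_diff_triangle[OF L, of a b] circdist_diff_triangle[OF L, of b a]
    circdist_uminus[of L "a - b"] by simp

section \<open>Complex exponentials\<close>

abbreviation phase :: "real \<Rightarrow> real \<Rightarrow> complex" where
  "phase a t \<equiv> exp (\<i> * complex_of_real (a * t))"

lemma phase_add: "phase a (s + t) = phase a s * phase a t"
  by (simp add: distrib_left exp_add[symmetric])

lemma phase_eq_1_iff:
  assumes a: "a \<noteq> 0"
  shows "phase a L = 1 \<longleftrightarrow> (\<exists>n::int. L = of_int n * (2 * pi / a))"
proof -
  have "phase a L = 1 \<longleftrightarrow> (\<exists>n::int. a * L = of_int (2 * n) * pi)" unfolding exp_eq_1 by simp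
  also have "\<dots> \<longleftrightarrow> (\<exists>n::int. L = of_int n * (2 * pi / a))"
    using a by (intro iff_exI) (auto simp: field_simps)
  finally show ?thesis .
qed

lemma phase_int_mult:
  assumes "phase a L = 1" shows "phase a (of_int m * L) = 1"
proof -
  obtain n :: int where "a * L = of_int (2 * n) * pi"
    using assms unfolding exp_eq_1 by auto
  then have "a * (of_int m * L) = of_int (2 * (m * n)) * pi" by (simp add: algebra_simps)
  then have "\<exists>k::int. a * (of_int m * L) = of_int (2 * k) * pi" by blast
  then show ?thesis unfolding exp_eq_1 by simp
qed

lemma cmod_phase_minus_1: "cmod (phase 1 u - 1) \<le> \<bar>u\<bar>"
proof -
  have e: "phase 1 u - 1 = Complex (cos u - 1) (sin u)"
    by (simp add: exp_Euler cos_of_real sin_of_real complex_eq_iff)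
  have c: "cos u = 1 - 2 * (sin (u/2))\<^sup>2" using cos_double_sin[of "u/2"] by simp
  have s: "sin u = 2 * sin (u/2) * cos (u/2)" using sin_double[of "u/2"] by simp
  have "(cos u - 1)\<^sup>2 + (sin u)\<^sup>2 = 4 * (sin (u/2))\<^sup>2"
    unfolding c s using sin_cos_squared_add[of "u/2"] by algebra
  also have "\<dots> \<le> u\<^sup>2"
  proof -
    have "(sin (u/2))\<^sup>2 \<le> (u/2)\<^sup>2" by (metis abs_le_square_iff abs_sin_x_le_abs_x)
    then show ?thesis by (simp add: power_divide)
  qed
  finally have "sqrt ((cos u - 1)\<^sup>2 + (sin u)\<^sup>2) \<le> \<bar>u\<bar>"
    by (metis real_sqrt_abs real_sqrt_le_mono)
  then show ?thesis unfolding e cmod_def by simp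
qed

lemma cmod_phase_diff_le_circdist:
  assumes L: "L \<ge> 0" and e: "phase a L = 1"
  shows "cmod (phase a s - phase a t) \<le> \<bar>a\<bar> * circdist L (s - t)"
proof -
  obtain m where m: "circdist L (s - t) = \<bar>s - t + of_int m * L\<bar>"
    using circdist_attained[OF L] by blast
  define w where "w = s - t + of_int m * L"
  have "phase a s * phase a (of_int m * L) = phase a t * phase a w"
    unfolding w_def phase_add[symmetric] by (simp add: algebra_simps)
  then have "phase a s - phase a t = phase a t * (phase 1 (a * w) - 1)"
    using phase_int_mult[OF e] by (simp add: algebra_simps)
  then have "cmod (phase a s - phase a t) = cmod (phase 1 (a * w) - 1)"
    by (simp add: norm_mult norm_exp_i_times)
  also have "\<dots> \<le> \<bar>a * w\<bar>" by (rule cmod_phase_minus_1)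
  finally show ?thesis using m w_def by (simp add: abs_mult)
qed

lemma phase_eq_if_circdist_0:
  assumes "L \<ge> 0" "phase a L = 1" "circdist L (s - t) = 0"
  shows "phase a s = phase a t"
  using cmod_phase_diff_le_circdist[OF assms(1,2), of s t] assms(3) by simp

section \<open>Difference quotients along a real parameter\<close>

lemma has_vector_derivative_iff_difference_quotient:
  fixes g :: "real \<Rightarrow> complex"
  shows "(g has_vector_derivative v) (at t) \<longleftrightarrow>
         ((\<lambda>h. (g (t + h) - g t) / complex_of_real h) \<longlongrightarrow> v) (at 0)"
proof -
  have eq: "norm (g (t + h) - g t - h *\<^sub>R v) / norm h = norm ((g (t + h) - g t) / complex_of_real h - v)"
    if "h \<noteq> 0" for h
  proof -
    have "(g (t + h) - g t) / complex_of_real h - v = (g (t + h) - g t - h *\<^sub>R v) / complex_of_real h"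
      using that by (simp add: scaleR_conv_of_real field_simps)
    then show ?thesis by (simp add: norm_divide)
  qed
  have "(g has_vector_derivative v) (at t) \<longleftrightarrow>
        ((\<lambda>h. norm (g (t + h) - g t - h *\<^sub>R v) / norm h) \<longlongrightarrow> 0) (at 0)"
    unfolding has_vector_derivative_def has_derivative_at
    using bounded_linear_scaleR_left[of v] by simp
  also have "\<dots> \<longleftrightarrow> ((\<lambda>h. norm ((g (t + h) - g t) / complex_of_real h - v)) \<longlongrightarrow> 0) (at 0)"
    by (rule tendsto_cong) (use eq in \<open>auto simp: eventually_at_filter\<close>)
  also have "\<dots> \<longleftrightarrow> ((\<lambda>h. (g (t + h) - g t) / complex_of_real h) \<longlongrightarrow> v) (at 0)"
    by (simp add: tendsto_norm_zero_iff LIM_zero_iff)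
  finally show ?thesis .
qed

lemma exp_difference_quotient:
  "((\<lambda>h. (exp (c * complex_of_real h) - 1) / complex_of_real h) \<longlongrightarrow> c) (at 0)"
proof -
  have "((\<lambda>w. exp (c * w)) has_field_derivative c * exp (c * of_real 0)) (at (of_real 0))"
    by (auto intro!: derivative_eq_intros)
  then have "((\<lambda>x. exp (c * of_real x)) has_vector_derivative c) (at (0::real))"
    using has_vector_derivative_real_field by fastforce
  then show ?thesis unfolding has_vector_derivative_iff_difference_quotient by simp
qed

lemma difference_quotient_linear_imp_exp:
  fixes g :: "real \<Rightarrow> complex"
  assumes "\<And>t. ((\<lambda>h. (g (t + h) - g t) / complex_of_real h) \<longlongrightarrow> b * g t) (at 0)"
  shows "g t = exp (b * of_real t) * g 0"
proof -
  have dg: "(g has_vector_derivative b * g t) (at t)" for t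
    using assms has_vector_derivative_iff_difference_quotient by blast
  have de: "((\<lambda>t. exp (- b * of_real t)) has_vector_derivative (- b) * exp (- b * of_real t)) (at t)" for t
  proof -
    have "((\<lambda>w. exp (- b * w)) has_field_derivative (- b) * exp (- b * of_real t)) (at (of_real t))"
      by (auto intro!: derivative_eq_intros)
    then show ?thesis using has_vector_derivative_real_field by fastforce
  qed
  have "((\<lambda>t. exp (- b * of_real t) * g t) has_vector_derivative 0) (at t within UNIV)" for t
    using has_vector_derivative_mult[OF de dg, of t] by (simp add: algebra_simps)
  then obtain c where c: "\<And>t. exp (- b * of_real t) * g t = c"
    using has_vector_derivative_zero_constant[of UNIV "\<lambda>t. exp (- b * of_real t) * g t"] by auto
  have "g t = exp (b * of_real t) * (exp (- b * of_real t) * g t)"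
    by (simp add: exp_minus field_simps)
  also have "\<dots> = exp (b * of_real t) * g 0" using c[of t] c[of 0] by simp
  finally show ?thesis .
qed

section \<open>The spectrum of U\<close>

locale virtual_perm_flow =
  fixes E :: "'a set" and enum :: "nat \<Rightarrow> 'a" and \<sigma> :: "'a set \<Rightarrow> 'a \<Rightarrow> 'a"
    and Ehat :: "'a set" and dhat :: "'a \<Rightarrow> 'a \<Rightarrow> real" and S :: "real \<Rightarrow> 'a \<Rightarrow> 'a"
  assumes enum: "bij_betw enum UNIV E"
    and vp: "virtual_perm E \<sigma>"
    and lam_conv: "\<forall>x\<in>E. convergent (lam_seq E enum \<sigma> x)"
    and Delta_conv: "\<forall>x y. vsim E \<sigma> x y \<longrightarrow> convergent (Delta_seq enum \<sigma> x y)"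
    and lam_pos: "\<forall>x\<in>E. lam E enum \<sigma> x > 0 \<longleftrightarrow> \<not> vfixed E \<sigma> x"
    and compl: "is_completion E (vdist E enum \<sigma>) Ehat dhat"
    and ext: "extensions_exist E enum \<sigma> Ehat dhat"
    and cls: "class_structure E enum \<sigma> Ehat dhat"
    and flow: "is_flow E enum \<sigma> Ehat dhat S"
begin

abbreviation "sim \<equiv> vsim E \<sigma>"
abbreviation "lm \<equiv> lam E enum \<sigma>"
abbreviation "Dl \<equiv> Delta enum \<sigma>"
abbreviation "lk \<equiv> lamk E enum \<sigma>"

lemma Iset_subset: "Iset enum n \<subseteq> E" "finite (Iset enum n)"
  using enum unfolding Iset_def bij_betw_def by auto

lemma eventually_in_Iset: "x \<in> E \<Longrightarrow> eventually (\<lambda>n. x \<in> Iset enum n) sequentially"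
proof -
  assume "x \<in> E"
  then obtain i where "enum i = x" using enum unfolding bij_betw_def by auto
  then show ?thesis unfolding Iset_def eventually_sequentially
    by (intro exI[of _ "Suc i"]) auto
qed

lemma lam_seq_tendsto: "x \<in> E \<Longrightarrow> lam_seq E enum \<sigma> x \<longlonglongrightarrow> lm x"
  using lam_conv unfolding lam_def by (simp add: convergent_LIMSEQ_iff)

lemma lam_bounds: "x \<in> E \<Longrightarrow> 0 \<le> lm x \<and> lm x \<le> 1"
proof -
  assume x: "x \<in> E"
  have "card (Iset enum n \<inter> vcls E \<sigma> x) \<le> card (Iset enum n)" for n
    using Iset_subset by (intro card_mono) auto
  then have "0 \<le> lam_seq E enum \<sigma> x n \<and> lam_seq E enum \<sigma> x n \<le> 1" for n
    unfolding lam_seq_def by (auto simp: divide_le_eq_1)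
  then show ?thesis
    using LIMSEQ_le_const[OF lam_seq_tendsto[OF x], of 0]
      LIMSEQ_le_const2[OF lam_seq_tendsto[OF x], of 1] by auto
qed

lemma lam_pos_iff: "x \<in> E \<Longrightarrow> lm x > 0 \<longleftrightarrow> lm x \<noteq> 0"
  using lam_bounds by force

lemma lam_vsim: "sim x y \<Longrightarrow> lm x = lm y"
  unfolding lam_def lam_seq_def using vcls_eq[OF vp] by simp

lemma vsim_lam_zero:
  assumes "x \<in> E" "lm x = 0" "sim x y" shows "y = x"
proof -
  have fixed: "vfixed E \<sigma> x" using lam_pos assms by auto
  obtain I n where I: "finite I" "I \<subseteq> E" "x \<in> I" "(\<sigma> I ^^ n) x = y"
    using assms(3) unfolding vsim_def by blast
  have "\<sigma> I x = x" using fixed I unfolding vfixed_def by blast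
  then have "(\<sigma> I ^^ n) x = x" by (induction n) auto
  then show ?thesis using I by simp
qed

lemma Delta_self: "Dl x x = 0"
proof -
  have "Delta_seq enum \<sigma> x x = (\<lambda>n. 0)"
    unfolding Delta_seq_def kI_def by (auto intro!: Least_equality)
  then show ?thesis unfolding Delta_def by (simp add: lim_const)
qed

lemma Delta_seq_tendsto: "sim x y \<Longrightarrow> Delta_seq enum \<sigma> x y \<longlonglongrightarrow> Dl x y"
  using Delta_conv unfolding Delta_def by (simp add: convergent_LIMSEQ_iff)

text \<open>By kI_cocycle, the defect of additivity of Delta_seq is 0 or lam_seq at every stage;
  dividing by lam_seq, which stays away from 0, forces the limit defect into {0, lam}.\<close>

lemma Delta_cocycle:
  assumes xy: "sim x y" and yz: "sim y z" and L: "lm x > 0"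
  shows "\<exists>m::int. Dl x z = Dl x y + Dl y z + of_int m * lm x"
proof -
  have xz: "sim x z" using vsim_trans[OF vp xy yz] .
  have xE: "x \<in> E" "y \<in> E" "z \<in> E" using xy yz vsim_in_E[OF vp] by auto
  define a where "a n = Delta_seq enum \<sigma> x y n + Delta_seq enum \<sigma> y z n - Delta_seq enum \<sigma> x z n" for n
  define j where "j n = (if kI \<sigma> (Iset enum n) x y + kI \<sigma> (Iset enum n) y z
                            = kI \<sigma> (Iset enum n) x z then 0 else (1::real))" for n
  have a_lim: "a \<longlonglongrightarrow> Dl x y + Dl y z - Dl x z"
    unfolding a_def by (intro tendsto_intros Delta_seq_tendsto xy yz xz)
  have lam_lim: "lam_seq E enum \<sigma> x \<longlonglongrightarrow> lm x" using lam_seq_tendsto xE by simp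
  have "eventually (\<lambda>n. x \<in> Iset enum n \<and> y \<in> Iset enum n \<and> z \<in> Iset enum n) sequentially"
    using eventually_in_Iset[OF xE(1)] eventually_in_Iset[OF xE(2)] eventually_in_Iset[OF xE(3)]
    by (intro eventually_conj)
  then have "eventually (\<lambda>n. a n = j n * lam_seq E enum \<sigma> x n) sequentially"
  proof eventually_elim
    case (elim n)
    let ?I = "Iset enum n"
    have "kI \<sigma> ?I x y + kI \<sigma> ?I y z = kI \<sigma> ?I x z \<or>
         kI \<sigma> ?I x y + kI \<sigma> ?I y z = kI \<sigma> ?I x z + card (?I \<inter> vcls E \<sigma> x)"
      using kI_cocycle[OF vp Iset_subset(2) Iset_subset(1)] elim xy yz by blast
    then have "real (kI \<sigma> ?I x y) + real (kI \<sigma> ?I y z) = real (kI \<sigma> ?I x z)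
        + j n * real (card (?I \<inter> vcls E \<sigma> x))"
      unfolding j_def by (auto simp flip: of_nat_add)
    then show ?case unfolding a_def Delta_seq_def lam_seq_def
      by (simp add: add_divide_distrib[symmetric] diff_divide_distrib[symmetric])
  qed
  moreover have "eventually (\<lambda>n. lam_seq E enum \<sigma> x n > 0) sequentially"
    using order_tendstoD(1)[OF lam_lim L] .
  ultimately have "eventually (\<lambda>n. a n / lam_seq E enum \<sigma> x n = j n) sequentially"
    by eventually_elim simp
  moreover have "(\<lambda>n. a n / lam_seq E enum \<sigma> x n) \<longlonglongrightarrow> (Dl x y + Dl y z - Dl x z) / lm x"
    using L by (intro tendsto_intros a_lim lam_lim) simp
  ultimately have "j \<longlonglongrightarrow> (Dl x y + Dl y z - Dl x z) / lm x"
    by (rule Lim_transform_eventually[rotated])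
  then have "(Dl x y + Dl y z - Dl x z) / lm x \<in> {0, 1}"
    by (rule Lim_in_closed_set[rotated -1]) (auto simp: j_def finite_imp_closed)
  then have "Dl x z = Dl x y + Dl y z + of_int 0 * lm x \<or> Dl x z = Dl x y + Dl y z + of_int (-1) * lm x"
    using L by (auto simp: field_simps)
  then show ?thesis by blast
qed

lemma sum_lam_le_1:
  assumes X: "finite X" "X \<subseteq> E" and nd: "\<And>x y. x \<in> X \<Longrightarrow> y \<in> X \<Longrightarrow> x \<noteq> y \<Longrightarrow> \<not> sim x y"
  shows "(\<Sum>x\<in>X. lm x) \<le> 1"
proof -
  have "(\<Sum>x\<in>X. lam_seq E enum \<sigma> x n) \<le> 1" for n
  proof -
    let ?I = "Iset enum n"
    have "(\<Sum>x\<in>X. card (?I \<inter> vcls E \<sigma> x)) = card (\<Union>x\<in>X. ?I \<inter> vcls E \<sigma> x)"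
      using X nd vcls_disjoint[OF vp] Iset_subset by (intro card_UN_disjoint[symmetric]) blast+
    also have "\<dots> \<le> card ?I" using Iset_subset by (intro card_mono) auto
    finally have "(\<Sum>x\<in>X. real (card (?I \<inter> vcls E \<sigma> x))) \<le> real (card ?I)"
      by (simp flip: of_nat_sum)
    then show ?thesis unfolding lam_seq_def sum_divide_distrib[symmetric]
      by (cases "card ?I = 0") (auto simp: divide_le_eq_1)
  qed
  moreover have "(\<lambda>n. \<Sum>x\<in>X. lam_seq E enum \<sigma> x n) \<longlonglongrightarrow> (\<Sum>x\<in>X. lm x)"
    using X by (intro tendsto_sum lam_seq_tendsto) auto
  ultimately show ?thesis using LIMSEQ_le_const2 by blast
qed


abbreviation "lh \<equiv> lamhat E enum \<sigma> dhat"
abbreviation "Dh \<equiv> Deltahat E enum \<sigma> dhat"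

lemma Metric_space_Ehat: "Metric_space Ehat dhat"
  using compl unfolding is_completion_def by blast

lemma dhat_sym: "dhat x y = dhat y x"
  using Metric_space.commute[OF Metric_space_Ehat] .

lemma dhat_triangle: "x \<in> Ehat \<Longrightarrow> y \<in> Ehat \<Longrightarrow> z \<in> Ehat \<Longrightarrow> dhat x z \<le> dhat x y + dhat y z"
  using Metric_space.triangle[OF Metric_space_Ehat] .

lemma dhat_eq_0_iff: "x \<in> Ehat \<Longrightarrow> y \<in> Ehat \<Longrightarrow> dhat x y = 0 \<longleftrightarrow> x = y"
  using Metric_space.zero[OF Metric_space_Ehat] .

lemma dhat_self: "x \<in> Ehat \<Longrightarrow> dhat x x = 0"
  using dhat_eq_0_iff by simp

lemma dhat_nonneg: "0 \<le> dhat x y"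
  using Metric_space.nonneg[OF Metric_space_Ehat] .

lemma E_subset_Ehat: "E \<subseteq> Ehat"
  using compl unfolding is_completion_def by blast

lemma dhat_on_E: "x \<in> E \<Longrightarrow> y \<in> E \<Longrightarrow> dhat x y = vdist E enum \<sigma> x y"
  using compl unfolding is_completion_def by blast

lemma E_dense: "x \<in> Ehat \<Longrightarrow> e > 0 \<Longrightarrow> \<exists>y\<in>E. dhat x y < e"
  using compl unfolding is_completion_def by blast

lemma dhat_vsim_le_half: assumes "x \<in> E" "y \<in> E" "sim x y" shows "dhat x y \<le> 1/2"
proof (cases "lm x > 0")
  case True
  have "dhat x y = circdist (lm x) (Dl x y)" using dhat_on_E assms unfolding vdist_def by simp
  also have "\<dots> \<le> lm x / 2" by (rule circdist_le_half[OF True])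
  also have "\<dots> \<le> 1/2" using lam_bounds assms by auto
  finally show ?thesis .
next
  case False
  then have "lm x = 0" using lam_pos_iff assms(1) by simp
  then have "y = x" using vsim_lam_zero assms(1,3) by blast
  then show ?thesis using dhat_self E_subset_Ehat assms(1) by auto
qed

lemma vsim_iff_dhat_less_1:
  assumes "x \<in> E" "y \<in> E" shows "sim x y \<longleftrightarrow> dhat x y < 1"
proof
  assume "sim x y" then show "dhat x y < 1" using dhat_vsim_le_half[OF assms] by simp
next
  assume "dhat x y < 1" then show "sim x y"
    using dhat_on_E[OF assms] unfolding vdist_def by (auto split: if_splits)
qed

lemma seqs_to_nonempty: assumes x: "x \<in> Ehat" shows "\<exists>xs. xs \<in> seqs_to E dhat x"
proof -
  define xs where "xs n = (SOME y. y \<in> E \<and> dhat x y < inverse (real (Suc n)))" for n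
  have xs: "xs n \<in> E \<and> dhat x (xs n) < inverse (real (Suc n))" for n
  proof -
    have "\<exists>y. y \<in> E \<and> dhat x y < inverse (real (Suc n))"
      using E_dense[OF x, of "inverse (real (Suc n))"] by auto
    then show ?thesis unfolding xs_def by (rule someI_ex)
  qed
  have "(\<lambda>n. dhat (xs n) x) \<longlonglongrightarrow> 0"
  proof (rule Lim_null_comparison[OF _ LIMSEQ_inverse_real_of_nat])
    show "\<forall>\<^sub>F n in sequentially. norm (dhat (xs n) x) \<le> inverse (real (Suc n))"
      using xs dhat_sym dhat_nonneg by (intro always_eventually allI) (simp add: less_imp_le)
  qed
  then show ?thesis using xs unfolding seqs_to_def by auto
qed

lemma seqs_to_in_E: "xs \<in> seqs_to E dhat x \<Longrightarrow> xs n \<in> E"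
  unfolding seqs_to_def by auto

lemma seqs_to_tendsto: "xs \<in> seqs_to E dhat x \<Longrightarrow> (\<lambda>n. dhat (xs n) x) \<longlonglongrightarrow> 0"
  unfolding seqs_to_def by auto

lemma seqs_to_const: "x \<in> E \<Longrightarrow> (\<lambda>n. x) \<in> seqs_to E dhat x"
  unfolding seqs_to_def using dhat_self E_subset_Ehat by auto

lemma dhat_seqs_to_tendsto:
  assumes x: "x \<in> Ehat" and y: "y \<in> Ehat"
    and xs: "xs \<in> seqs_to E dhat x" and ys: "ys \<in> seqs_to E dhat y"
  shows "(\<lambda>n. dhat (xs n) (ys n)) \<longlonglongrightarrow> dhat x y"
proof -
  have "(\<lambda>n. dhat (xs n) (ys n) - dhat x y) \<longlonglongrightarrow> 0"
  proof (rule Lim_null_comparison)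
    show "(\<lambda>n. dhat (xs n) x + dhat (ys n) y) \<longlonglongrightarrow> 0"
      using tendsto_add[OF seqs_to_tendsto[OF xs] seqs_to_tendsto[OF ys]] by simp
    show "\<forall>\<^sub>F n in sequentially. norm (dhat (xs n) (ys n) - dhat x y) \<le> dhat (xs n) x + dhat (ys n) y"
    proof (intro always_eventually allI)
      fix n
      have a: "xs n \<in> Ehat" "ys n \<in> Ehat"
        using seqs_to_in_E[OF xs] seqs_to_in_E[OF ys] E_subset_Ehat by auto
      have "dhat (xs n) (ys n) \<le> dhat (xs n) x + dhat x y + dhat y (ys n)"
        using dhat_triangle[OF a(1) x a(2)] dhat_triangle[OF x y a(2)] by simp
      moreover have "dhat x y \<le> dhat x (xs n) + dhat (xs n) (ys n) + dhat (ys n) y"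
        using dhat_triangle[OF x a(1) y] dhat_triangle[OF a(1) a(2) y] by simp
      ultimately show "norm (dhat (xs n) (ys n) - dhat x y) \<le> dhat (xs n) x + dhat (ys n) y"
        using dhat_sym[of x "xs n"] dhat_sym[of y "ys n"] by simp
    qed
  qed
  then show ?thesis by (simp add: LIM_zero_iff)
qed

text \<open>The gap in the values of dhat on E (at most 1/2 within a class, 1 across classes)
  passes to the completion: two points of the completion are equivalent iff their distance
  is below 1.\<close>

definition hsim :: "'a \<Rightarrow> 'a \<Rightarrow> bool" where
  "hsim x y \<longleftrightarrow> x \<in> Ehat \<and> y \<in> Ehat \<and> dhat x y < 1"

lemma eventually_vsim_if_hsim:
  assumes "hsim x y" and xs: "xs \<in> seqs_to E dhat x" and ys: "ys \<in> seqs_to E dhat y"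
  shows "eventually (\<lambda>n. sim (xs n) (ys n)) sequentially"
proof -
  have h: "x \<in> Ehat" "y \<in> Ehat" "dhat x y < 1" using assms(1) unfolding hsim_def by auto
  have "eventually (\<lambda>n. dhat (xs n) (ys n) < 1) sequentially"
    using order_tendstoD(2)[OF dhat_seqs_to_tendsto[OF h(1,2) xs ys] h(3)] .
  then show ?thesis
    by eventually_elim (use vsim_iff_dhat_less_1 seqs_to_in_E xs ys in blast)
qed

lemma dhat_le_half_if_simhat:
  assumes x: "x \<in> Ehat" and y: "y \<in> Ehat" and "simhat E \<sigma> dhat x y"
  shows "dhat x y \<le> 1/2"
proof -
  obtain xs ys where xs: "xs \<in> seqs_to E dhat x" and ys: "ys \<in> seqs_to E dhat y"
    using seqs_to_nonempty x y by blast
  have "eventually (\<lambda>n. sim (xs n) (ys n)) sequentially"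
    using assms(3) xs ys unfolding simhat_def by blast
  then have "eventually (\<lambda>n. dhat (xs n) (ys n) \<le> 1/2) sequentially"
    by eventually_elim (use dhat_vsim_le_half seqs_to_in_E xs ys in blast)
  then show ?thesis
    using tendsto_le[OF trivial_limit_sequentially tendsto_const dhat_seqs_to_tendsto[OF x y xs ys]]
    by blast
qed

lemma simhat_iff_hsim:
  assumes "x \<in> Ehat" "y \<in> Ehat" shows "simhat E \<sigma> dhat x y \<longleftrightarrow> hsim x y"
proof
  assume "simhat E \<sigma> dhat x y"
  then show "hsim x y" using dhat_le_half_if_simhat assms unfolding hsim_def by fastforce
next
  assume "hsim x y"
  then show "simhat E \<sigma> dhat x y" unfolding simhat_def using eventually_vsim_if_hsim by blast
qed

lemma hsim_dhat_le_half: "hsim x y \<Longrightarrow> dhat x y \<le> 1/2"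
  using dhat_le_half_if_simhat simhat_iff_hsim unfolding hsim_def by blast

lemma hsim_sym: "hsim x y \<Longrightarrow> hsim y x"
  unfolding hsim_def using dhat_sym by auto

lemma hsim_refl: "x \<in> Ehat \<Longrightarrow> hsim x x"
  unfolding hsim_def using dhat_self by auto

lemma hsim_iff_vsim: "x \<in> E \<Longrightarrow> y \<in> E \<Longrightarrow> hsim x y \<longleftrightarrow> sim x y"
  unfolding hsim_def using vsim_iff_dhat_less_1 E_subset_Ehat by auto

lemma hsim_if_dhat_near:
  assumes "hsim x y" "z \<in> Ehat" "dhat y z < 1/2" shows "hsim x z"
  using hsim_dhat_le_half[OF assms(1)] dhat_triangle[of x y z] assms unfolding hsim_def by auto

text \<open>Transitivity is inherited from E through points of E within distance 1/8.\<close>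

lemma hsim_trans:
  assumes xy: "hsim x y" and yz: "hsim y z" shows "hsim x z"
proof -
  have h: "x \<in> Ehat" "y \<in> Ehat" "z \<in> Ehat" using xy yz unfolding hsim_def by auto
  obtain x' where x': "x' \<in> E" "dhat x x' < 1/8" using E_dense[OF h(1), of "1/8"] by auto
  obtain y' where y': "y' \<in> E" "dhat y y' < 1/8" using E_dense[OF h(2), of "1/8"] by auto
  obtain z' where z': "z' \<in> E" "dhat z z' < 1/8" using E_dense[OF h(3), of "1/8"] by auto
  have E': "x' \<in> Ehat" "y' \<in> Ehat" "z' \<in> Ehat" using x' y' z' E_subset_Ehat by auto
  have near: "hsim u w" if "hsim u v" "w \<in> Ehat" "dhat v w < 1/8 \<or> dhat w v < 1/8" for u v w
    using hsim_if_dhat_near[OF that(1,2)] that(3) dhat_sym[of v w] by auto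
  have "hsim y' x'"
    using near[OF hsim_sym[OF near[OF xy E'(2)]] E'(1)] x' y' by simp
  moreover have "hsim z' y'"
    using near[OF hsim_sym[OF near[OF yz E'(3)]] E'(2)] y' z' by simp
  ultimately have "hsim x' z'"
    using hsim_iff_vsim x' y' z' vsim_trans[OF vp] vsim_sym[OF vp] by metis
  then have "hsim z x'" using hsim_sym near[of x' z' z] h(3) z' by simp
  then show ?thesis using hsim_sym near[of z x' x] h(1) x' by simp
qed


lemma lamhat_tendsto:
  assumes x: "x \<in> Ehat" and xs: "xs \<in> seqs_to E dhat x"
  shows "(\<lambda>n. lm (xs n)) \<longlonglongrightarrow> lh x"
proof -
  obtain L where L: "\<forall>xs\<in>seqs_to E dhat x. (\<lambda>n. lm (xs n)) \<longlonglongrightarrow> L"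
    using ext x unfolding extensions_exist_def by blast
  have "(SOME xs. xs \<in> seqs_to E dhat x) \<in> seqs_to E dhat x"
    using seqs_to_nonempty[OF x] by (rule someI_ex)
  then have "lh x = L" unfolding lamhat_def using L by (intro limI) blast
  then show ?thesis using L xs by simp
qed

lemma lamhat_eq_lam_near:
  assumes x: "x \<in> Ehat" and y: "y \<in> E" and xy: "dhat x y < 1"
  shows "lh x = lm y"
proof -
  obtain xs where xs: "xs \<in> seqs_to E dhat x" using seqs_to_nonempty x by blast
  have "eventually (\<lambda>n. dhat (xs n) x < 1 - dhat x y) sequentially"
    using order_tendstoD(2)[OF seqs_to_tendsto[OF xs]] xy by simp
  then have "eventually (\<lambda>n. lm y = lm (xs n)) sequentially"
  proof eventually_elim
    case (elim n)
    have "dhat (xs n) y < 1"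
      using dhat_triangle[of "xs n" x y] elim x y seqs_to_in_E[OF xs] E_subset_Ehat by force
    then show ?case using vsim_iff_dhat_less_1 seqs_to_in_E[OF xs] y lam_vsim by metis
  qed
  then have "(\<lambda>n. lm (xs n)) \<longlonglongrightarrow> lm y" by (rule Lim_transform_eventually[OF tendsto_const])
  with lamhat_tendsto[OF x xs] show ?thesis using LIMSEQ_unique by metis
qed

lemma lamhat_on_E: assumes "x \<in> E" shows "lh x = lm x"
proof -
  have "x \<in> Ehat" using assms E_subset_Ehat by auto
  then show ?thesis using lamhat_eq_lam_near[of x x] dhat_self assms by simp
qed

lemma lamhat_hsim: assumes "hsim x y" shows "lh x = lh y"
proof -
  have h: "x \<in> Ehat" "y \<in> Ehat" "dhat x y \<le> 1/2"
    using assms hsim_dhat_le_half unfolding hsim_def by auto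
  obtain z where z: "z \<in> E" "dhat x z < 1/4" using E_dense[OF h(1), of "1/4"] by auto
  have "dhat y z < 1"
    using dhat_triangle[of y x z] h z dhat_sym[of y x] E_subset_Ehat by force
  then show ?thesis using lamhat_eq_lam_near[OF h(1) z(1)] lamhat_eq_lam_near[OF h(2) z(1)] z by simp
qed

lemma lamhat_bounds: assumes x: "x \<in> Ehat" shows "0 \<le> lh x \<and> lh x \<le> 1"
proof -
  obtain y where "y \<in> E" "dhat x y < 1" using E_dense[OF x, of 1] by auto
  then show ?thesis using lamhat_eq_lam_near[OF x] lam_bounds by simp
qed

lemma lamhat_pos_iff: "x \<in> Ehat \<Longrightarrow> lh x > 0 \<longleftrightarrow> lh x \<noteq> 0"
  using lamhat_bounds by force

lemma eventually_lam_eq_lamhat: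
  assumes x: "x \<in> Ehat" and xs: "xs \<in> seqs_to E dhat x"
  shows "eventually (\<lambda>n. lm (xs n) = lh x) sequentially"
proof -
  have "eventually (\<lambda>n. dhat (xs n) x < 1) sequentially"
    using order_tendstoD(2)[OF seqs_to_tendsto[OF xs]] by simp
  then show ?thesis
    by eventually_elim (use lamhat_eq_lam_near[OF x seqs_to_in_E[OF xs]] dhat_sym in simp)
qed

definition Kpos :: "nat set" where
  "Kpos = {k. k \<ge> 1 \<and> lk k > 0}"

lemma hatcls_eq: assumes "x \<in> Ehat" shows "hatcls E \<sigma> Ehat dhat x = {y. hsim x y}"
  unfolding hatcls_def using simhat_iff_hsim[OF assms] unfolding hsim_def by auto

lemma hsim_lamhat_zero: assumes "hsim x y" "lh x = 0" shows "y = x"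
proof -
  have "\<forall>x\<in>Ehat. lh x = 0 \<longrightarrow> hatcls E \<sigma> Ehat dhat x = {x}"
    using cls[unfolded class_structure_def, THEN conjunct2, THEN conjunct2, THEN conjunct1] .
  then have "{y. hsim x y} = {x}" using assms hatcls_eq unfolding hsim_def by auto
  then show ?thesis using assms(1) by blast
qed

lemma lamhat_eq_0_D:
  assumes x: "x \<in> Ehat" and "lh x = 0" shows "x \<in> E" "lm x = 0"
proof -
  obtain y where y: "y \<in> E" "dhat x y < 1" using E_dense[OF x, of 1] by auto
  then have "hsim x y" using x E_subset_Ehat unfolding hsim_def by auto
  then have "y = x" using hsim_lamhat_zero assms(2) by blast
  then show "x \<in> E" "lm x = 0" using y lamhat_on_E assms(2) by auto
qed

definition centre :: "nat \<Rightarrow> 'a" where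
  "centre = (SOME c. (\<forall>k\<in>Kpos. c k \<in> Ehat \<and> lh (c k) = lk k) \<and>
       inj_on (\<lambda>k. hatcls E \<sigma> Ehat dhat (c k)) Kpos \<and>
       (\<forall>x\<in>Ehat. lh x > 0 \<longrightarrow> (\<exists>k\<in>Kpos. x \<in> hatcls E \<sigma> Ehat dhat (c k))))"

lemma centre:
  "\<forall>k\<in>Kpos. centre k \<in> Ehat \<and> lh (centre k) = lk k"
  "inj_on (\<lambda>k. hatcls E \<sigma> Ehat dhat (centre k)) Kpos"
  "\<forall>x\<in>Ehat. lh x > 0 \<longrightarrow> (\<exists>k\<in>Kpos. x \<in> hatcls E \<sigma> Ehat dhat (centre k))"
proof -
  obtain c where c: "\<forall>k\<in>Kpos. c k \<in> Ehat \<and> lh (c k) = lk k \<and>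
        isometric_circle dhat (hatcls E \<sigma> Ehat dhat (c k)) (lk k)"
      "inj_on (\<lambda>k. hatcls E \<sigma> Ehat dhat (c k)) Kpos"
      "\<forall>x\<in>Ehat. lh x > 0 \<longrightarrow> (\<exists>k\<in>Kpos. x \<in> hatcls E \<sigma> Ehat dhat (c k))"
    using cls[unfolded class_structure_def Let_def, THEN conjunct1] unfolding Kpos_def by blast
  then have "\<exists>c. (\<forall>k\<in>Kpos. c k \<in> Ehat \<and> lh (c k) = lk k) \<and>
       inj_on (\<lambda>k. hatcls E \<sigma> Ehat dhat (c k)) Kpos \<and>
       (\<forall>x\<in>Ehat. lh x > 0 \<longrightarrow> (\<exists>k\<in>Kpos. x \<in> hatcls E \<sigma> Ehat dhat (c k)))"
    by (intro exI[of _ c]) simp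
  from someI_ex[OF this] show
    "\<forall>k\<in>Kpos. centre k \<in> Ehat \<and> lh (centre k) = lk k"
    "inj_on (\<lambda>k. hatcls E \<sigma> Ehat dhat (centre k)) Kpos"
    "\<forall>x\<in>Ehat. lh x > 0 \<longrightarrow> (\<exists>k\<in>Kpos. x \<in> hatcls E \<sigma> Ehat dhat (centre k))"
    unfolding centre_def by blast+
qed

lemma obtain_circle:
  assumes x: "x \<in> Ehat" and "lh x > 0"
  obtains k where "k \<in> Kpos" "hsim (centre k) x" "lh x = lk k"
proof -
  obtain k where k: "k \<in> Kpos" "x \<in> hatcls E \<sigma> Ehat dhat (centre k)" using centre(3) assms by blast
  then have "hsim (centre k) x" using hatcls_eq centre(1) by auto
  then show ?thesis using that k lamhat_hsim centre(1) by auto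
qed

lemma centre_inj:
  assumes "k \<in> Kpos" "k' \<in> Kpos" "hsim (centre k) (centre k')" shows "k = k'"
proof -
  have "{y. hsim (centre k) y} = {y. hsim (centre k') y}"
    using assms(3) hsim_trans hsim_sym by blast
  then have "hatcls E \<sigma> Ehat dhat (centre k) = hatcls E \<sigma> Ehat dhat (centre k')"
    using centre(1) assms(1,2) hatcls_eq by simp
  then show ?thesis using inj_onD[OF centre(2)] assms(1,2) by blast
qed


lemma Deltahat_tendsto:
  assumes "hsim x y" and L: "lh x > 0"
    and xs: "xs \<in> seqs_to E dhat x" and ys: "ys \<in> seqs_to E dhat y"
  shows "(\<lambda>n. circdist (lm (xs n)) (Dl (xs n) (ys n) - Dh x y)) \<longlonglongrightarrow> 0"
proof -
  have h: "x \<in> Ehat" "y \<in> Ehat" using assms(1) unfolding hsim_def by auto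
  have "\<forall>x\<in>Ehat. \<forall>y\<in>Ehat. simhat E \<sigma> dhat x y \<and> lh x > 0 \<longrightarrow>
        (\<exists>D. \<forall>xs\<in>seqs_to E dhat x. \<forall>ys\<in>seqs_to E dhat y.
          (\<lambda>n. circdist (lm (xs n)) (Dl (xs n) (ys n) - D)) \<longlonglongrightarrow> 0)"
    using ext[unfolded extensions_exist_def, THEN conjunct2, THEN conjunct2] .
  then have "\<exists>D. \<forall>xs\<in>seqs_to E dhat x. \<forall>ys\<in>seqs_to E dhat y.
          (\<lambda>n. circdist (lm (xs n)) (Dl (xs n) (ys n) - D)) \<longlonglongrightarrow> 0"
    using h L simhat_iff_hsim[OF h] assms(1) by blast
  from someI_ex[OF this] show ?thesis unfolding Deltahat_def[symmetric] using xs ys by blast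
qed

lemma dhat_eq_circdist_Deltahat:
  assumes xy: "hsim x y" and L: "lh x > 0"
  shows "dhat x y = circdist (lh x) (Dh x y)"
proof -
  have h: "x \<in> Ehat" "y \<in> Ehat" using xy unfolding hsim_def by auto
  obtain xs ys where xs: "xs \<in> seqs_to E dhat x" and ys: "ys \<in> seqs_to E dhat y"
    using seqs_to_nonempty h by blast
  have L0: "lh x \<ge> 0" using L by simp
  have ev: "eventually (\<lambda>n. lm (xs n) = lh x \<and> sim (xs n) (ys n)) sequentially"
    using eventually_lam_eq_lamhat[OF h(1) xs] eventually_vsim_if_hsim[OF xy xs ys]
    by (rule eventually_conj)
  have "(\<lambda>n. circdist (lh x) (Dl (xs n) (ys n)) - circdist (lh x) (Dh x y)) \<longlonglongrightarrow> 0"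
  proof (rule Lim_null_comparison[OF _ Deltahat_tendsto[OF xy L xs ys]])
    show "\<forall>\<^sub>F n in sequentially. norm (circdist (lh x) (Dl (xs n) (ys n)) - circdist (lh x) (Dh x y))
            \<le> circdist (lm (xs n)) (Dl (xs n) (ys n) - Dh x y)"
      using ev by eventually_elim (use circdist_lipschitz[OF L0] in simp)
  qed
  then have "(\<lambda>n. circdist (lh x) (Dl (xs n) (ys n))) \<longlonglongrightarrow> circdist (lh x) (Dh x y)"
    by (simp add: LIM_zero_iff)
  moreover have "eventually (\<lambda>n. circdist (lh x) (Dl (xs n) (ys n)) = dhat (xs n) (ys n)) sequentially"
    using ev by eventually_elim
      (use dhat_on_E[OF seqs_to_in_E[OF xs] seqs_to_in_E[OF ys]] in \<open>simp add: vdist_def\<close>)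
  ultimately have "(\<lambda>n. dhat (xs n) (ys n)) \<longlonglongrightarrow> circdist (lh x) (Dh x y)"
    by (rule Lim_transform_eventually)
  with dhat_seqs_to_tendsto[OF h xs ys] show ?thesis using LIMSEQ_unique by metis
qed

text \<open>Delta_cocycle holds along approximating sequences from E, so it passes to the limit.\<close>

lemma Deltahat_cocycle:
  assumes xy: "hsim x y" and yz: "hsim y z" and L: "lh x > 0"
  shows "circdist (lh x) (Dh x z - Dh x y - Dh y z) = 0"
proof -
  have xz: "hsim x z" using hsim_trans[OF xy yz] .
  have h: "x \<in> Ehat" "y \<in> Ehat" "z \<in> Ehat" using xy yz unfolding hsim_def by auto
  define L where "L = lh x"
  have L0: "L > 0" using L L_def by simp
  have Ly: "lh y = L" using lamhat_hsim[OF xy] L_def by simp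
  obtain xs ys zs where xs: "xs \<in> seqs_to E dhat x" and ys: "ys \<in> seqs_to E dhat y"
    and zs: "zs \<in> seqs_to E dhat z"
    using seqs_to_nonempty h by metis
  define err where "err n = circdist (lm (xs n)) (Dl (xs n) (ys n) - Dh x y)
      + circdist (lm (ys n)) (Dl (ys n) (zs n) - Dh y z)
      + circdist (lm (xs n)) (Dl (xs n) (zs n) - Dh x z)" for n
  have "err \<longlonglongrightarrow> 0 + 0 + 0"
    unfolding err_def using L0 Ly
    by (intro tendsto_add Deltahat_tendsto xy yz xz L xs ys zs) simp_all
  moreover have "eventually (\<lambda>n. lm (xs n) = L \<and> lm (ys n) = L \<and> sim (xs n) (ys n) \<and> sim (ys n) (zs n))
      sequentially"
    using eventually_lam_eq_lamhat[OF h(1) xs] eventually_lam_eq_lamhat[OF h(2) ys]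
      eventually_vsim_if_hsim[OF xy xs ys] eventually_vsim_if_hsim[OF yz ys zs]
    unfolding L_def Ly[symmetric] by eventually_elim (simp add: Ly L_def)
  then have "eventually (\<lambda>n. circdist L (Dh x z - Dh x y - Dh y z) \<le> err n) sequentially"
  proof eventually_elim
    case (elim n)
    define a b c where "a = xs n" and "b = ys n" and "c = zs n"
    have ab: "sim a b" "sim b c" "lm a = L" "lm b = L" using elim a_def b_def c_def by auto
    obtain m where m: "Dl a c = Dl a b + Dl b c + of_int m * L"
      using Delta_cocycle[OF ab(1,2)] ab(3) L0 by auto
    have "circdist L (Dh x z - Dh x y - Dh y z)
        = circdist L (- (Dl a c - Dh x z) + (Dl a b - Dh x y) + (Dl b c - Dh y z) + of_int m * L)"
      using m by (simp add: algebra_simps)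
    also have "\<dots> = circdist L (- (Dl a c - Dh x z) + (Dl a b - Dh x y) + (Dl b c - Dh y z))"
      by (rule circdist_add_multiple)
    also have "\<dots> \<le> circdist L (Dl a c - Dh x z) + circdist L (Dl a b - Dh x y) + circdist L (Dl b c - Dh y z)"
      using circdist_triangle[of L] L0 circdist_uminus
      by (smt (verit, ccfv_threshold))
    finally show ?case using ab unfolding err_def a_def b_def c_def by simp
  qed
  ultimately have "circdist L (Dh x z - Dh x y - Dh y z) \<le> 0"
    using tendsto_le[OF trivial_limit_sequentially _ tendsto_const] by simp
  then show ?thesis using circdist_nonneg[of L] L_def by (simp add: antisym)
qed

lemma circdist_Deltahat_self: "x \<in> Ehat \<Longrightarrow> lh x > 0 \<Longrightarrow> circdist (lh x) (Dh x x) = 0"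
  using Deltahat_cocycle[OF hsim_refl hsim_refl] circdist_uminus[of "lh x" "Dh x x"] by simp

lemma Deltahat_inj:
  assumes xy: "hsim x y" and xz: "hsim x z" and L: "lh x > 0"
    and c: "circdist (lh x) (Dh x y - Dh x z) = 0"
  shows "y = z"
proof -
  have yz: "hsim y z" using hsim_trans[OF hsim_sym[OF xy] xz] .
  have L0: "lh x \<ge> 0" using L by simp
  have "circdist (lh x) (Dh y z - (Dh x z - Dh x y)) = 0"
    using Deltahat_cocycle[OF xy yz L] circdist_uminus[of "lh x" "Dh x z - Dh x y - Dh y z"]
    by (simp add: algebra_simps)
  moreover have "circdist (lh x) (Dh x z - Dh x y) = 0"
    using c circdist_uminus[of "lh x" "Dh x y - Dh x z"] by simp
  ultimately have "circdist (lh x) (Dh y z) = 0" by (rule circdist_eq_0_triangle[OF L0])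
  then have "dhat y z = 0"
    using dhat_eq_circdist_Deltahat[OF yz] lamhat_hsim[OF xy] L by simp
  then show ?thesis using dhat_eq_0_iff yz unfolding hsim_def by simp
qed

lemma circdist_Delta_Deltahat:
  assumes x: "x \<in> E" and y: "y \<in> E" and xy: "sim x y" and L: "lm x > 0"
  shows "circdist (lm x) (Dh x y - Dl x y) = 0"
proof -
  have "(\<lambda>n. circdist (lm x) (Dl x y - Dh x y)) \<longlonglongrightarrow> 0"
    using Deltahat_tendsto[OF _ _ seqs_to_const[OF x] seqs_to_const[OF y]]
      hsim_iff_vsim[OF x y] xy lamhat_on_E[OF x] L by simp
  then show ?thesis using LIMSEQ_unique[OF tendsto_const] circdist_uminus by (metis minus_diff_eq)
qed

lemma flow_in: "x \<in> Ehat \<Longrightarrow> S \<alpha> x \<in> Ehat"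
  using flow bij_betw_apply unfolding is_flow_def by metis

lemma flow_isometry: "x \<in> Ehat \<Longrightarrow> y \<in> Ehat \<Longrightarrow> dhat (S \<alpha> x) (S \<alpha> y) = dhat x y"
  using flow unfolding is_flow_def by blast

lemma flow_add: "x \<in> Ehat \<Longrightarrow> S (\<alpha> + \<beta>) x = S \<alpha> (S \<beta> x)"
  using flow unfolding is_flow_def by blast

lemma flow_fixed: "x \<in> Ehat \<Longrightarrow> lh x = 0 \<Longrightarrow> S \<alpha> x = x"
  using flow unfolding is_flow_def by blast

lemma flow_hsim: assumes "x \<in> Ehat" "lh x > 0" shows "hsim x (S \<alpha> x)"
  using flow assms simhat_iff_hsim[OF assms(1) flow_in[OF assms(1)]] unfolding is_flow_def by blast

lemma flow_Deltahat: "x \<in> Ehat \<Longrightarrow> lh x > 0 \<Longrightarrow> circdist (lh x) (Dh x (S \<alpha> x) - \<alpha>) = 0"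
  using flow unfolding is_flow_def by blast

lemma flow_0: assumes x: "x \<in> Ehat" shows "S 0 x = x"
proof -
  have "S 0 (S 0 x) = S 0 x" using flow_add[OF x, of 0 0] by simp
  moreover have "inj_on (S 0) Ehat" using flow unfolding is_flow_def bij_betw_def by blast
  ultimately show ?thesis using flow_in[OF x] x inj_onD by metis
qed

lemma flow_Deltahat_eq:
  assumes xy: "hsim x y" and L: "lh x > 0" shows "S (Dh x y) x = y"
proof -
  have x: "x \<in> Ehat" using xy unfolding hsim_def by simp
  have "circdist (lh x) (Dh x y - Dh x (S (Dh x y) x)) = 0"
    using flow_Deltahat[OF x L, of "Dh x y"] circdist_uminus[of "lh x" "Dh x (S (Dh x y) x) - Dh x y"]
    by simp
  then have "y = S (Dh x y) x" by (rule Deltahat_inj[OF xy flow_hsim[OF x L] L])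
  then show ?thesis by simp
qed

lemma flow_period:
  assumes x: "x \<in> Ehat" and L: "lh x > 0" shows "S (lh x) x = x"
proof -
  have "circdist (lh x) (lh x - Dh x x) = 0"
    using circdist_Deltahat_self[OF x L] circdist_uminus[of "lh x" "Dh x x"]
      circdist_add_multiple[of "lh x" "- Dh x x" 1] by simp
  then have "circdist (lh x) (Dh x (S (lh x) x) - Dh x x) = 0"
    using circdist_eq_0_triangle[of "lh x" _ "lh x - Dh x x"] flow_Deltahat[OF x L] L by simp
  then show ?thesis using Deltahat_inj[OF flow_hsim[OF x L] hsim_refl[OF x] L] by simp
qed


abbreviation "eig \<equiv> eigenspace E Ehat dhat S"
abbreviation "fh \<equiv> fhat E Ehat dhat"

lemma contin_hat_unique:
  assumes g1: "contin_hat Ehat dhat g1" and g2: "contin_hat Ehat dhat g2"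
    and eq: "\<forall>x\<in>E. g1 x = g2 x" and x: "x \<in> Ehat"
  shows "g1 x = g2 x"
proof (rule ccontr)
  assume ne: "g1 x \<noteq> g2 x"
  define e where "e = cmod (g1 x - g2 x) / 2"
  have e: "e > 0" using ne unfolding e_def by simp
  obtain d1 where d1: "d1 > 0" "\<forall>y\<in>Ehat. dhat x y < d1 \<longrightarrow> cmod (g1 y - g1 x) < e"
    using g1 x e unfolding contin_hat_def by blast
  obtain d2 where d2: "d2 > 0" "\<forall>y\<in>Ehat. dhat x y < d2 \<longrightarrow> cmod (g2 y - g2 x) < e"
    using g2 x e unfolding contin_hat_def by blast
  obtain y where y: "y \<in> E" "dhat x y < min d1 d2" using E_dense[OF x, of "min d1 d2"] d1 d2 by auto
  have "cmod (g1 y - g1 x) < e" "cmod (g2 y - g2 x) < e" using d1 d2 y E_subset_Ehat by auto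
  moreover have "cmod (g1 x - g2 x) \<le> cmod (g2 y - g2 x) + cmod (g1 y - g1 x)"
    using eq y norm_triangle_ineq4[of "g2 y - g2 x" "g1 y - g1 x"] by simp
  ultimately show False unfolding e_def by simp
qed

lemma is_ext_fhat: assumes "vcont E Ehat dhat f" shows "is_ext E Ehat dhat f (fh f)"
proof -
  from assms have "\<exists>g. is_ext E Ehat dhat f g" unfolding vcont_def .
  then show ?thesis unfolding fhat_def by (rule someI_ex)
qed

lemma fhat_eq: assumes g: "is_ext E Ehat dhat f g" and x: "x \<in> Ehat" shows "fh f x = g x"
proof -
  have "is_ext E Ehat dhat f (fh f)" using is_ext_fhat g unfolding vcont_def by blast
  then show ?thesis using contin_hat_unique[OF _ _ _ x] g unfolding is_ext_def by simp
qed

lemma contin_hat_scale: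
  assumes "contin_hat Ehat dhat g" shows "contin_hat Ehat dhat (\<lambda>x. c * g x)"
  unfolding contin_hat_def
proof (intro ballI allI impI)
  fix x e assume x: "x \<in> Ehat" and e: "(e::real) > 0"
  have cp: "cmod c + 1 > 0" by (smt (verit) norm_ge_zero)
  obtain d where d: "d > 0" "\<forall>y\<in>Ehat. dhat x y < d \<longrightarrow> cmod (g y - g x) < e / (cmod c + 1)"
    using assms x divide_pos_pos[OF e cp] unfolding contin_hat_def by blast
  show "\<exists>\<delta>>0. \<forall>y\<in>Ehat. dhat x y < \<delta> \<longrightarrow> cmod (c * g y - c * g x) < e"
  proof (intro exI[of _ d] conjI ballI impI)
    fix y assume "y \<in> Ehat" "dhat x y < d"
    then have h: "cmod (g y - g x) < e / (cmod c + 1)" using d by blast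
    have "cmod (c * g y - c * g x) = cmod c * cmod (g y - g x)"
      by (simp add: norm_mult[symmetric] right_diff_distrib)
    also have "\<dots> \<le> (cmod c + 1) * cmod (g y - g x)" by (simp add: mult_right_mono)
    also have "\<dots> < (cmod c + 1) * (e / (cmod c + 1))"
      using h cp by (intro mult_strict_left_mono) auto
    also have "\<dots> = e" using cp by simp
    finally show "cmod (c * g y - c * g x) < e" .
  qed (use d in simp)
qed

lemma fhat_Tflow:
  assumes f: "vcont E Ehat dhat f" and x: "x \<in> Ehat"
  shows "fh (Tflow E Ehat dhat S \<alpha> f) x = fh f (S \<alpha> x)"
proof -
  have F: "contin_hat Ehat dhat (fh f)" using is_ext_fhat[OF f] unfolding is_ext_def by blast
  have "contin_hat Ehat dhat (\<lambda>x. fh f (S \<alpha> x))" unfolding contin_hat_def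
  proof (intro ballI allI impI)
    fix z e assume z: "z \<in> Ehat" and e: "(e::real) > 0"
    obtain d where "d > 0" "\<forall>y\<in>Ehat. dhat (S \<alpha> z) y < d \<longrightarrow> cmod (fh f y - fh f (S \<alpha> z)) < e"
      using F flow_in[OF z] e unfolding contin_hat_def by blast
    then show "\<exists>\<delta>>0. \<forall>y\<in>Ehat. dhat z y < \<delta> \<longrightarrow> cmod (fh f (S \<alpha> y) - fh f (S \<alpha> z)) < e"
      using flow_isometry[OF z] flow_in by (intro exI[of _ d]) auto
  qed
  then have "is_ext E Ehat dhat (Tflow E Ehat dhat S \<alpha> f) (\<lambda>x. fh f (S \<alpha> x))"
    unfolding is_ext_def Tflow_def by simp
  then show ?thesis using fhat_eq x by blast
qed

subsection \<open>Eigenfunctions are exponential along the flow\<close>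

lemma eigenspace_difference_quotient:
  assumes f: "f \<in> eig b"
  shows "is_ext E Ehat dhat f (fh f)"
    and "\<And>x. x \<in> Ehat \<Longrightarrow>
      ((\<lambda>\<alpha>. (fh f (S \<alpha> x) - fh f x) / complex_of_real \<alpha>) \<longlongrightarrow> b * fh f x) (at 0)"
proof -
  obtain u where u: "has_U E Ehat dhat S f u" "\<forall>x\<in>E. u x = b * f x"
    using f unfolding eigenspace_def by blast
  have vf: "vcont E Ehat dhat f" using u unfolding has_U_def by auto
  show F: "is_ext E Ehat dhat f (fh f)" by (rule is_ext_fhat[OF vf])
  have "is_ext E Ehat dhat u (\<lambda>x. b * fh f x)"
    using contin_hat_scale[of "fh f" b] F u(2) unfolding is_ext_def by auto
  then have U: "fh u x = b * fh f x" if "x \<in> Ehat" for x using fhat_eq that by blast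
  fix x assume x: "x \<in> Ehat"
  have "((\<lambda>\<alpha>. (fh (Tflow E Ehat dhat S \<alpha> f) x - fh f x) / complex_of_real \<alpha>) \<longlongrightarrow> fh u x) (at 0)"
    using u(1) x unfolding has_U_def by blast
  then show "((\<lambda>\<alpha>. (fh f (S \<alpha> x) - fh f x) / complex_of_real \<alpha>) \<longlongrightarrow> b * fh f x) (at 0)"
    using fhat_Tflow[OF vf x] U[OF x] by simp
qed

lemma eigenspace_along_flow:
  assumes f: "f \<in> eig b" and x: "x \<in> Ehat"
  shows "fh f (S t x) = exp (b * of_real t) * fh f x"
proof -
  have "((\<lambda>h. (fh f (S (t + h) x) - fh f (S t x)) / complex_of_real h) \<longlongrightarrow> b * fh f (S t x)) (at 0)"
    for t
    using eigenspace_difference_quotient(2)[OF f flow_in[OF x]] flow_add[OF x]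
    by (simp add: add.commute)
  then have "fh f (S t x) = exp (b * of_real t) * fh f (S 0 x)"
    by (rule difference_quotient_linear_imp_exp[where g = "\<lambda>t. fh f (S t x)"])
  then show ?thesis using flow_0[OF x] by simp
qed

lemma eigenspace_on_E: "f \<in> eig b \<Longrightarrow> x \<in> E \<Longrightarrow> fh f x = f x"
  using eigenspace_difference_quotient(1) unfolding is_ext_def by simp

lemma eigenspace_fixed_point:
  assumes f: "f \<in> eig b" and x: "x \<in> E" and l: "lm x = 0" shows "b * f x = 0"
proof -
  have xh: "x \<in> Ehat" using x E_subset_Ehat by auto
  have "S \<alpha> x = x" for \<alpha> using flow_fixed xh lamhat_on_E[OF x] l by simp
  then have "((\<lambda>\<alpha>. 0) \<longlongrightarrow> b * fh f x) (at (0::real))"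
    using eigenspace_difference_quotient(2)[OF f xh] by simp
  then show ?thesis using LIM_const_eq eigenspace_on_E[OF f x] by metis
qed

lemma eigenspace_period:
  assumes f: "f \<in> eig b" and x: "x \<in> E" and l: "lm x > 0"
  shows "exp (b * of_real (lm x)) * f x = f x"
proof -
  have xh: "x \<in> Ehat" using x E_subset_Ehat by auto
  have "S (lm x) x = x" using flow_period[OF xh] lamhat_on_E[OF x] l by simp
  then show ?thesis
    using eigenspace_along_flow[OF f xh, of "lm x"] eigenspace_on_E[OF f x] by simp
qed

lemma eigenspace_vsim:
  assumes f: "f \<in> eig b" and x: "x \<in> E" and y: "y \<in> E" and xy: "sim x y" and l: "lm x > 0"
  shows "f y = exp (b * of_real (Dh x y)) * f x"
proof -
  have "hsim x y" using hsim_iff_vsim x y xy by simp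
  then have "S (Dh x y) x = y" using flow_Deltahat_eq lamhat_on_E[OF x] l by simp
  moreover have "x \<in> Ehat" using x E_subset_Ehat by auto
  ultimately show ?thesis using eigenspace_along_flow[OF f, of x "Dh x y"]
      eigenspace_on_E[OF f x] eigenspace_on_E[OF f y] by simp
qed


definition resonant :: "real \<Rightarrow> 'a \<Rightarrow> bool" where
  "resonant a x \<longleftrightarrow> a = 0 \<or> (lm x > 0 \<and> phase a (lm x) = 1)"

definition phase_covariant :: "real \<Rightarrow> ('a \<Rightarrow> complex) \<Rightarrow> bool" where
  "phase_covariant a f \<longleftrightarrow> (\<forall>x\<in>E. \<forall>y\<in>E. sim x y \<longrightarrow> f y = f x * phase a (Dl x y))"

definition resonant_support :: "real \<Rightarrow> ('a \<Rightarrow> complex) \<Rightarrow> bool" where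
  "resonant_support a f \<longleftrightarrow> (\<forall>x\<in>E. f x \<noteq> 0 \<longrightarrow> resonant a x)"

lemma resonant_phase: "resonant a x \<Longrightarrow> phase a (lm x) = 1"
  unfolding resonant_def by auto

lemma resonant_vsim: "sim x y \<Longrightarrow> resonant a x \<longleftrightarrow> resonant a y"
  unfolding resonant_def using lam_vsim by simp

lemma resonant_support_phase:
  "resonant_support a f \<Longrightarrow> x \<in> E \<Longrightarrow> f x \<noteq> 0 \<Longrightarrow> phase a (lm x) = 1"
  unfolding resonant_support_def using resonant_phase by blast

lemma exp_imag_mult: "exp (\<i> * complex_of_real a * complex_of_real t) = phase a t"
  by (simp add: mult.assoc)

lemma eigenspace_resonant_support:
  assumes f: "f \<in> eig (\<i> * of_real a)" shows "resonant_support a f"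
  unfolding resonant_support_def
proof (intro ballI impI)
  fix x assume x: "x \<in> E" and fx: "f x \<noteq> 0"
  show "resonant a x"
  proof (cases "a = 0")
    case False
    then have "lm x > 0"
      using eigenspace_fixed_point[OF f x] fx lam_pos_iff[OF x] by auto
    moreover have "phase a (lm x) = 1"
      using eigenspace_period[OF f x] calculation fx exp_imag_mult by simp
    ultimately show ?thesis unfolding resonant_def by simp
  qed (simp add: resonant_def)
qed

lemma eigenspace_phase_covariant:
  assumes f: "f \<in> eig (\<i> * of_real a)" shows "phase_covariant a f"
  unfolding phase_covariant_def
proof (intro ballI impI)
  fix x y assume x: "x \<in> E" and y: "y \<in> E" and xy: "sim x y"
  show "f y = f x * phase a (Dl x y)"
  proof (cases "lm x > 0")
    case False
    then have "y = x" using vsim_lam_zero[OF x _ xy] lam_pos_iff[OF x] by blast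
    then show ?thesis using Delta_self by simp
  next
    case True
    have fy: "f y = phase a (Dh x y) * f x"
      using eigenspace_vsim[OF f x y xy True] exp_imag_mult by simp
    show ?thesis
    proof (cases "f x = 0")
      case False
      then have "phase a (lm x) = 1"
        using resonant_support_phase[OF eigenspace_resonant_support[OF f] x] by simp
      then show ?thesis
        using phase_eq_if_circdist_0[of "lm x" a "Dh x y" "Dl x y"] fy
          circdist_Delta_Deltahat[OF x y xy True] True by simp
    qed (use fy in simp)
  qed
qed

subsection \<open>Construction of eigenfunctions\<close>

definition approx_point :: "'a \<Rightarrow> 'a" where
  "approx_point z = (SOME x. x \<in> E \<and> dhat z x < 1)"

lemma approx_point:
  assumes z: "z \<in> Ehat" shows "approx_point z \<in> E" "hsim z (approx_point z)"
proof -
  have "\<exists>x. x \<in> E \<and> dhat z x < 1" using E_dense[OF z, of 1] by auto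
  then have "approx_point z \<in> E \<and> dhat z (approx_point z) < 1"
    unfolding approx_point_def by (rule someI_ex)
  then show "approx_point z \<in> E" "hsim z (approx_point z)"
    using z E_subset_Ehat unfolding hsim_def by auto
qed

text \<open>On a circle the extension of f is read off a nearby point of E through Deltahat;
  points with lh = 0 belong to E.\<close>

definition phase_extension :: "real \<Rightarrow> ('a \<Rightarrow> complex) \<Rightarrow> 'a \<Rightarrow> complex" where
  "phase_extension a f z =
     (if lh z > 0 then f (approx_point z) * phase a (Dh (approx_point z) z) else f (approx_point z))"

lemma phase_extension_eq:
  assumes cov: "phase_covariant a f" and supp: "resonant_support a f"
    and zx': "hsim z x'" and x': "x' \<in> E" and l: "lm x' > 0"
  shows "phase_extension a f z = f x' * phase a (Dh x' z)"
proof -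
  have z: "z \<in> Ehat" using zx' unfolding hsim_def by simp
  define x where "x = approx_point z"
  have x: "x \<in> E" "hsim z x" using approx_point[OF z] x_def by auto
  have xx': "hsim x x'" using hsim_trans[OF hsim_sym[OF x(2)] zx'] .
  have sim: "sim x x'" using hsim_iff_vsim x(1) x' xx' by simp
  have L: "lm x > 0" "lh x = lm x" using lam_vsim[OF sim] l lamhat_on_E[OF x(1)] by auto
  have "lh z = lm x'" using lamhat_hsim[OF zx'] lamhat_on_E[OF x'] by simp
  then have g: "phase_extension a f z = f x * phase a (Dh x z)"
    unfolding phase_extension_def x_def[symmetric] using l by simp
  have fx': "f x' = f x * phase a (Dl x x')" using cov x(1) x' sim unfolding phase_covariant_def by blast
  show ?thesis
  proof (cases "f x = 0")
    case False
    have L0: "lm x \<ge> 0" using L by simp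
    have "circdist (lm x) (Dh x z - (Dl x x' + Dh x' z)) = 0"
    proof (rule circdist_eq_0_triangle[OF L0])
      show "circdist (lm x) (Dh x z - (Dl x x' + Dh x' z) - (Dh x x' - Dl x x')) = 0"
        using Deltahat_cocycle[OF xx' hsim_sym[OF zx']] L by (simp add: algebra_simps)
      show "circdist (lm x) (Dh x x' - Dl x x') = 0"
        by (rule circdist_Delta_Deltahat[OF x(1) x' sim L(1)])
    qed
    then have "phase a (Dh x z) = phase a (Dl x x' + Dh x' z)"
      using phase_eq_if_circdist_0[OF L0 resonant_support_phase[OF supp x(1) False]] by blast
    then show ?thesis using g fx' phase_add by simp
  qed (use g fx' in simp)
qed

lemma phase_extension_lamhat_zero:
  assumes z: "z \<in> Ehat" and l: "lh z = 0" shows "phase_extension a f z = f z"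
  using hsim_lamhat_zero[OF approx_point(2)[OF z] l] l unfolding phase_extension_def by simp

lemma phase_extension_on_E:
  assumes cov: "phase_covariant a f" and supp: "resonant_support a f" and z: "z \<in> E"
  shows "phase_extension a f z = f z"
proof (cases "lm z > 0")
  case False
  then show ?thesis
    using phase_extension_lamhat_zero z E_subset_Ehat lamhat_on_E lam_pos_iff by auto
next
  case True
  have zh: "z \<in> Ehat" using z E_subset_Ehat by auto
  have g: "phase_extension a f z = f z * phase a (Dh z z)"
    using phase_extension_eq[OF cov supp hsim_refl[OF zh] z True] .
  show ?thesis
  proof (cases "f z = 0")
    case False
    have "circdist (lm z) (Dh z z - 0) = 0"
      using circdist_Deltahat_self[OF zh] lamhat_on_E[OF z] True by simp
    then have "phase a (Dh z z) = phase a 0"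
      using phase_eq_if_circdist_0[of "lm z" a "Dh z z" 0] resonant_support_phase[OF supp z False] True by simp
    then show ?thesis using g by simp
  qed (use g in simp)
qed

lemma obtain_point_on_circle:
  assumes z: "z \<in> Ehat" and l: "lh z > 0"
  obtains x' where "x' \<in> E" "hsim z x'" "lm x' = lh z"
  using approx_point[OF z] lamhat_hsim lamhat_on_E by metis

text \<open>Along a circle the extension is |a| times |f x'| Lipschitz, by the Lipschitz bound for
  phases and the identity dhat z y = circdist (lh z) (Dh z y).\<close>

lemma cmod_phase_extension_diff_le:
  assumes cov: "phase_covariant a f" and supp: "resonant_support a f"
    and x': "x' \<in> E" "hsim z x'" "lm x' > 0" and zy: "hsim z y"
  shows "cmod (phase_extension a f y - phase_extension a f z) \<le> cmod (f x') * \<bar>a\<bar> * dhat z y"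
proof -
  define L where "L = lm x'"
  have L0: "L > 0" using x' L_def by simp
  have lz: "lh z = L" using lamhat_hsim[OF x'(2)] lamhat_on_E[OF x'(1)] L_def by simp
  have gy: "phase_extension a f y = f x' * phase a (Dh x' y)"
    using phase_extension_eq[OF cov supp hsim_trans[OF hsim_sym[OF zy] x'(2)] x'(1,3)] .
  have gz: "phase_extension a f z = f x' * phase a (Dh x' z)"
    using phase_extension_eq[OF cov supp x'(2) x'(1,3)] .
  show ?thesis
  proof (cases "f x' = 0")
    case False
    have "circdist L (Dh x' y - Dh x' z) \<le> circdist L (Dh x' y - Dh x' z - Dh z y) + circdist L (Dh z y)"
      using circdist_diff_triangle L0 by simp
    also have "circdist L (Dh x' y - Dh x' z - Dh z y) = 0"
      using Deltahat_cocycle[OF hsim_sym[OF x'(2)] zy] lamhat_on_E[OF x'(1)] L_def L0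
      by (simp add: algebra_simps)
    also have "circdist L (Dh z y) = dhat z y" using dhat_eq_circdist_Deltahat[OF zy] lz L0 by simp
    finally have "circdist L (Dh x' y - Dh x' z) \<le> dhat z y" by simp
    moreover have "cmod (phase a (Dh x' y) - phase a (Dh x' z)) \<le> \<bar>a\<bar> * circdist L (Dh x' y - Dh x' z)"
      using cmod_phase_diff_le_circdist[of L a] resonant_support_phase[OF supp x'(1) False] L0 L_def
      by simp
    ultimately have "cmod (phase a (Dh x' y) - phase a (Dh x' z)) \<le> \<bar>a\<bar> * dhat z y"
      by (smt (verit) abs_ge_zero mult_left_mono)
    then have "cmod (f x') * cmod (phase a (Dh x' y) - phase a (Dh x' z)) \<le> cmod (f x') * (\<bar>a\<bar> * dhat z y)"
      by (rule mult_left_mono) simp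
    then show ?thesis using gy gz by (simp add: norm_mult[symmetric] right_diff_distrib mult.assoc)
  qed (use gy gz dhat_nonneg in simp)
qed

lemma contin_hat_phase_extension:
  assumes cov: "phase_covariant a f" and supp: "resonant_support a f"
  shows "contin_hat Ehat dhat (phase_extension a f)"
  unfolding contin_hat_def
proof (intro ballI allI impI)
  fix z e assume z: "z \<in> Ehat" and e: "(e::real) > 0"
  show "\<exists>\<delta>>0. \<forall>y\<in>Ehat. dhat z y < \<delta> \<longrightarrow> cmod (phase_extension a f y - phase_extension a f z) < e"
  proof (cases "lh z > 0")
    case False
    then have "lh z = 0" using lamhat_pos_iff[OF z] by simp
    then have "phase_extension a f y = phase_extension a f z" if "y \<in> Ehat" "dhat z y < 1" for y
      using hsim_lamhat_zero z that unfolding hsim_def by blast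
    then show ?thesis using e by (intro exI[of _ 1]) auto
  next
    case True
    obtain x' where x': "x' \<in> E" "hsim z x'" "lm x' = lh z" using obtain_point_on_circle[OF z True] .
    define K where "K = cmod (f x') * \<bar>a\<bar> + 1"
    have K: "K > 0" unfolding K_def by (smt (verit) norm_ge_zero zero_le_mult_iff abs_ge_zero)
    show ?thesis
    proof (intro exI[of _ "min 1 (e / K)"] conjI ballI impI)
      show "min 1 (e / K) > 0" using e K by simp
      fix y assume y: "y \<in> Ehat" "dhat z y < min 1 (e / K)"
      have "cmod (phase_extension a f y - phase_extension a f z) \<le> cmod (f x') * \<bar>a\<bar> * dhat z y"
        using cmod_phase_extension_diff_le[OF cov supp x'(1,2)] x'(3) True y z unfolding hsim_def by simp
      also have "\<dots> \<le> K * dhat z y" unfolding K_def using dhat_nonneg[of z y] by (simp add: algebra_simps)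
      also have "\<dots> < K * (e / K)" using y K by (intro mult_strict_left_mono) auto
      finally show "cmod (phase_extension a f y - phase_extension a f z) < e" using K by simp
    qed
  qed
qed

lemma phase_extension_flow:
  assumes cov: "phase_covariant a f" and supp: "resonant_support a f"
    and z: "z \<in> Ehat" and l: "lh z > 0"
  shows "phase_extension a f (S h z) = phase_extension a f z * phase a h"
proof -
  obtain x' where x': "x' \<in> E" "hsim z x'" "lm x' = lh z" using obtain_point_on_circle[OF z l] .
  define L where "L = lm x'"
  have L0: "L > 0" using x' l L_def by simp
  define w where "w = S h z"
  have zw: "hsim z w" using flow_hsim[OF z l] w_def by simp
  have gw: "phase_extension a f w = f x' * phase a (Dh x' w)"
    using phase_extension_eq[OF cov supp hsim_trans[OF hsim_sym[OF zw] x'(2)] x'(1)] x' l by simp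
  have gz: "phase_extension a f z = f x' * phase a (Dh x' z)"
    using phase_extension_eq[OF cov supp x'(2,1)] x' l by simp
  show ?thesis
  proof (cases "f x' = 0")
    case False
    have "circdist L (Dh x' w - (Dh x' z + h)) = 0"
    proof (rule circdist_eq_0_triangle[of L _ "Dh z w - h"])
      show "circdist L (Dh x' w - (Dh x' z + h) - (Dh z w - h)) = 0"
        using Deltahat_cocycle[OF hsim_sym[OF x'(2)] zw] lamhat_on_E[OF x'(1)] L_def L0
        by (simp add: algebra_simps)
      show "circdist L (Dh z w - h) = 0" using flow_Deltahat[OF z l, of h] x'(3) L_def w_def by simp
    qed (use L0 in simp)
    then have "phase a (Dh x' w) = phase a (Dh x' z + h)"
      using phase_eq_if_circdist_0[of L a] resonant_support_phase[OF supp x'(1) False] L0 L_def by simp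
    then show ?thesis using gw gz phase_add w_def by simp
  qed (use gw gz w_def in simp)
qed

lemma phase_extension_difference_quotient:
  assumes cov: "phase_covariant a f" and supp: "resonant_support a f" and z: "z \<in> Ehat"
  shows "((\<lambda>h. (phase_extension a f (S h z) - phase_extension a f z) / complex_of_real h)
      \<longlongrightarrow> (\<i> * of_real a) * phase_extension a f z) (at 0)"
proof (cases "lh z > 0")
  case False
  then have l: "lh z = 0" using lamhat_pos_iff[OF z] by simp
  have zero: "(\<i> * of_real a) * phase_extension a f z = 0"
  proof (cases "a = 0")
    case False
    then have "\<not> resonant a z"
      using lamhat_eq_0_D[OF z l] unfolding resonant_def by simp
    then show ?thesis
      using supp lamhat_eq_0_D[OF z l] phase_extension_lamhat_zero[OF z l]
      unfolding resonant_support_def by auto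
  qed simp
  have "(\<lambda>h. (phase_extension a f (S h z) - phase_extension a f z) / complex_of_real h) = (\<lambda>h. 0)"
    using flow_fixed[OF z l] by simp
  then show ?thesis unfolding zero by simp
next
  case True
  let ?g = "phase_extension a f z"
  have "((\<lambda>h. ?g * ((exp ((\<i> * of_real a) * complex_of_real h) - 1) / complex_of_real h))
      \<longlongrightarrow> ?g * (\<i> * of_real a)) (at 0)"
    by (intro tendsto_intros exp_difference_quotient)
  moreover have "(\<lambda>h. ?g * ((exp ((\<i> * of_real a) * complex_of_real h) - 1) / complex_of_real h))
      = (\<lambda>h. (phase_extension a f (S h z) - ?g) / complex_of_real h)"
  proof
    fix h
    have "phase_extension a f (S h z) - ?g = ?g * (exp ((\<i> * of_real a) * complex_of_real h) - 1)"
      using phase_extension_flow[OF cov supp z True, of h] exp_imag_mult[of a h]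
      by (simp add: algebra_simps)
    then show "?g * ((exp ((\<i> * of_real a) * complex_of_real h) - 1) / complex_of_real h)
      = (phase_extension a f (S h z) - ?g) / complex_of_real h"
      by (simp only: times_divide_eq_right)
  qed
  ultimately show ?thesis by (simp add: mult.commute)
qed

lemma eigenspace_if_phase_covariant:
  assumes f: "f \<in> FE E" and cov: "phase_covariant a f" and supp: "resonant_support a f"
  shows "f \<in> eig (\<i> * of_real a)"
proof -
  define g where "g = phase_extension a f"
  define u where "u x = (if x \<in> E then (\<i> * of_real a) * f x else 0)" for x
  have ext_f: "is_ext E Ehat dhat f g"
    unfolding is_ext_def g_def using contin_hat_phase_extension[OF cov supp]
      phase_extension_on_E[OF cov supp] by auto
  have ext_u: "is_ext E Ehat dhat u (\<lambda>x. (\<i> * of_real a) * g x)"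
    using contin_hat_scale ext_f unfolding is_ext_def u_def by auto
  have "has_U E Ehat dhat S f u" unfolding has_U_def
  proof (intro conjI ballI)
    show vf: "vcont E Ehat dhat f" "vcont E Ehat dhat u"
      using ext_f ext_u unfolding vcont_def by blast+
    fix x assume x: "x \<in> Ehat"
    have "((\<lambda>h. (g (S h x) - g x) / complex_of_real h) \<longlongrightarrow> (\<i> * of_real a) * g x) (at 0)"
      unfolding g_def by (rule phase_extension_difference_quotient[OF cov supp x])
    then show "((\<lambda>\<alpha>. (fh (Tflow E Ehat dhat S \<alpha> f) x - fh f x) / complex_of_real \<alpha>) \<longlongrightarrow> fh u x) (at 0)"
      using fhat_Tflow[OF vf(1) x] fhat_eq[OF ext_f] fhat_eq[OF ext_u x] x flow_in by simp
  qed
  then show ?thesis using f unfolding eigenspace_def u_def by auto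
qed

lemma eigenspace_imag_eq:
  "eig (\<i> * of_real a) = {f \<in> FE E. phase_covariant a f \<and> resonant_support a f}"
  using eigenspace_if_phase_covariant eigenspace_phase_covariant eigenspace_resonant_support
  unfolding eigenspace_def by blast


definition class_phase :: "real \<Rightarrow> 'a \<Rightarrow> 'a \<Rightarrow> complex" where
  "class_phase a x0 y = (if sim x0 y then phase a (Dl x0 y) else 0)"

lemma class_phase_eigenspace:
  assumes x0: "x0 \<in> E" and res: "resonant a x0"
  shows "class_phase a x0 \<in> eig (\<i> * of_real a)"
  unfolding eigenspace_imag_eq
proof (intro CollectI conjI)
  show "class_phase a x0 \<in> FE E" unfolding FE_def class_phase_def using vsim_in_E[OF vp] by auto
  show "phase_covariant a (class_phase a x0)" unfolding phase_covariant_def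
  proof (intro ballI impI)
    fix x y assume "x \<in> E" "y \<in> E" and xy: "sim x y"
    show "class_phase a x0 y = class_phase a x0 x * phase a (Dl x y)"
    proof (cases "sim x0 x")
      case True
      have "phase a (Dl x0 y) = phase a (Dl x0 x) * phase a (Dl x y)"
      proof (cases "a = 0")
        case False
        then have l: "lm x0 > 0" "phase a (lm x0) = 1" using res unfolding resonant_def by auto
        obtain m where m: "Dl x0 y = Dl x0 x + Dl x y + of_int m * lm x0"
          using Delta_cocycle[OF True xy l(1)] by blast
        have "phase a (of_int m * lm x0) = 1" by (rule phase_int_mult[OF l(2)])
        then show ?thesis unfolding m phase_add by simp
      qed simp
      then show ?thesis unfolding class_phase_def using True vsim_trans[OF vp True xy] by simp
    next
      case False
      then have "\<not> sim x0 y" using vsim_trans[OF vp _ vsim_sym[OF vp xy]] by blast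
      then show ?thesis unfolding class_phase_def using False by simp
    qed
  qed
  show "resonant_support a (class_phase a x0)"
    unfolding resonant_support_def class_phase_def using res resonant_vsim by auto
qed

lemma eigenspace_lin_comb:
  assumes B: "finite B" "B \<subseteq> eig (\<i> * of_real a)"
  shows "(\<lambda>y. \<Sum>b\<in>B. c b * b y) \<in> eig (\<i> * of_real a)"
proof -
  have Bc: "b \<in> FE E" "phase_covariant a b" "resonant_support a b" if "b \<in> B" for b
    using B(2) that eigenspace_imag_eq by blast+
  have vanish: "(\<Sum>b\<in>B. c b * b y) = 0" if "\<forall>b\<in>B. b y = 0" for y
    using that by (intro sum.neutral) simp
  show ?thesis unfolding eigenspace_imag_eq
  proof (intro CollectI conjI)
    show "(\<lambda>y. \<Sum>b\<in>B. c b * b y) \<in> FE E"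
      using Bc(1) vanish unfolding FE_def by blast
    show "phase_covariant a (\<lambda>y. \<Sum>b\<in>B. c b * b y)" unfolding phase_covariant_def
      using Bc(2) unfolding phase_covariant_def by (simp add: sum_distrib_right mult.assoc)
    show "resonant_support a (\<lambda>y. \<Sum>b\<in>B. c b * b y)"
      using Bc(3) vanish unfolding resonant_support_def by fastforce
  qed
qed

context
  fixes X :: "'a set" and a :: real
  assumes X: "finite X" "X \<subseteq> E"
    and distinct_classes: "\<And>x y. x \<in> X \<Longrightarrow> y \<in> X \<Longrightarrow> x \<noteq> y \<Longrightarrow> \<not> sim x y"
    and X_resonant: "\<And>x. x \<in> X \<Longrightarrow> resonant a x"
begin

lemma class_phase_delta:
  "x \<in> X \<Longrightarrow> x0 \<in> X \<Longrightarrow> class_phase a x x0 = (if x = x0 then 1 else 0)"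
  unfolding class_phase_def using vsim_refl[OF vp] Delta_self distinct_classes X by auto

lemma inj_on_class_phase: "inj_on (class_phase a) X"
  by (intro inj_onI) (metis class_phase_delta zero_neq_one)

lemma sum_class_phase_image:
  "(\<Sum>b\<in>class_phase a ` X. c b * b y) = (\<Sum>x\<in>X. c (class_phase a x) * class_phase a x y)"
  using sum.reindex[OF inj_on_class_phase] by simp

lemma class_phase_family:
  "class_phase a ` X \<subseteq> eig (\<i> * of_real a)" "lin_indep (class_phase a ` X)"
  "card (class_phase a ` X) = card X"
proof -
  show "class_phase a ` X \<subseteq> eig (\<i> * of_real a)"
    using class_phase_eigenspace X X_resonant by auto
  show "card (class_phase a ` X) = card X" using card_image[OF inj_on_class_phase] .
  show "lin_indep (class_phase a ` X)" unfolding lin_indep_def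
  proof (intro conjI allI impI ballI)
    show "finite (class_phase a ` X)" using X by simp
    fix c b assume zero: "\<forall>y. (\<Sum>b\<in>class_phase a ` X. c b * b y) = 0" and "b \<in> class_phase a ` X"
    then obtain x0 where x0: "x0 \<in> X" "b = class_phase a x0" by auto
    have "0 = (\<Sum>x\<in>X. c (class_phase a x) * class_phase a x x0)"
      using zero[rule_format, of x0] sum_class_phase_image[of c x0] by simp
    also have "\<dots> = (\<Sum>x\<in>X. if x = x0 then c (class_phase a x) else 0)"
      using class_phase_delta x0 by (intro sum.cong) auto
    also have "\<dots> = c b" using x0 X by (simp add: sum.delta')
    finally show "c b = 0" by simp
  qed
qed

lemma eigenspace_expansion:
  assumes cover: "\<forall>y\<in>E. resonant a y \<longrightarrow> (\<exists>x\<in>X. sim x y)"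
    and f: "f \<in> eig (\<i> * of_real a)"
  shows "f y = (\<Sum>x\<in>X. f x * class_phase a x y)"
proof (cases "y \<in> E \<and> resonant a y")
  case True
  then obtain x where x: "x \<in> X" "sim x y" using cover by blast
  have "(\<Sum>x'\<in>X. f x' * class_phase a x' y) = (\<Sum>x'\<in>X. if x' = x then f x * class_phase a x y else 0)"
  proof (rule sum.cong)
    fix x' assume x': "x' \<in> X"
    show "f x' * class_phase a x' y = (if x' = x then f x * class_phase a x y else 0)"
    proof (cases "x' = x")
      case False
      then have "\<not> sim x' y"
        using distinct_classes[OF x' x(1)] vsim_trans[OF vp _ vsim_sym[OF vp x(2)]] by blast
      then show ?thesis using False unfolding class_phase_def by simp
    qed simp
  qed simp
  also have "\<dots> = f x * class_phase a x y" using x X by (simp add: sum.delta')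
  also have "\<dots> = f x * phase a (Dl x y)" using x(2) unfolding class_phase_def by simp
  also have "\<dots> = f y"
  proof -
    have "phase_covariant a f" using f eigenspace_imag_eq by blast
    moreover have "x \<in> E" using x(1) X by auto
    ultimately show ?thesis using x(2) True unfolding phase_covariant_def by simp
  qed
  finally show ?thesis by simp
next
  case False
  have "\<not> sim x y" if "x \<in> X" for x
    using False X_resonant[OF that] resonant_vsim[of x y a] vsim_in_E[OF vp, of x y] by blast
  then have "class_phase a x y = 0" if "x \<in> X" for x
    using that unfolding class_phase_def by simp
  moreover have "f y = 0"
  proof (cases "y \<in> E")
    case True
    then show ?thesis using f False unfolding eigenspace_imag_eq resonant_support_def by blast
  next
    case False
    then show ?thesis using f unfolding eigenspace_imag_eq FE_def by blast
  qed
  ultimately show ?thesis by simp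
qed

lemma has_dim_eigenspace:
  assumes cover: "\<forall>y\<in>E. resonant a y \<longrightarrow> (\<exists>x\<in>X. sim x y)"
  shows "has_dim (eig (\<i> * of_real a)) (card X)"
proof -
  have "lin_span (class_phase a ` X) = eig (\<i> * of_real a)"
  proof
    show "lin_span (class_phase a ` X) \<subseteq> eig (\<i> * of_real a)"
    proof
      fix g assume "g \<in> lin_span (class_phase a ` X)"
      then obtain c where "g = (\<lambda>y. \<Sum>b\<in>class_phase a ` X. c b * b y)"
        unfolding lin_span_def by blast
      then show "g \<in> eig (\<i> * of_real a)"
        using eigenspace_lin_comb[OF _ class_phase_family(1)] X(1) by simp
    qed
  next
    show "eig (\<i> * of_real a) \<subseteq> lin_span (class_phase a ` X)"
    proof
      fix f assume f: "f \<in> eig (\<i> * of_real a)"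
      define c where "c b = f (inv_into X (class_phase a) b)" for b
      have sum_eq: "(\<Sum>b\<in>class_phase a ` X. c b * b y) = (\<Sum>x\<in>X. f x * class_phase a x y)" for y
        unfolding sum_class_phase_image
        by (rule sum.cong) (simp_all add: c_def inv_into_f_f[OF inj_on_class_phase])
      have "f = (\<lambda>y. \<Sum>b\<in>class_phase a ` X. c b * b y)"
        unfolding sum_eq fun_eq_iff using eigenspace_expansion[OF cover f] by blast
      then show "f \<in> lin_span (class_phase a ` X)" unfolding lin_span_def by blast
    qed
  qed
  then show ?thesis
    unfolding has_dim_def using class_phase_family by (intro exI[of _ "class_phase a ` X"]) simp
qed

end


definition circle_point :: "nat \<Rightarrow> 'a" where
  "circle_point k = approx_point (centre k)"

lemma circle_point:
  assumes k: "k \<in> Kpos"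
  shows "circle_point k \<in> E" "hsim (centre k) (circle_point k)" "lm (circle_point k) = lk k"
proof -
  have c: "centre k \<in> Ehat" "lh (centre k) = lk k" using centre(1) k by auto
  show E: "circle_point k \<in> E" and h: "hsim (centre k) (circle_point k)"
    using approx_point[OF c(1)] unfolding circle_point_def by auto
  show "lm (circle_point k) = lk k" using lamhat_hsim[OF h] lamhat_on_E[OF E] c(2) by simp
qed

lemma circle_points_distinct_classes:
  assumes "k \<in> Kpos" "k' \<in> Kpos" "k \<noteq> k'" shows "\<not> sim (circle_point k) (circle_point k')"
proof
  assume "sim (circle_point k) (circle_point k')"
  then have "hsim (circle_point k) (circle_point k')" using hsim_iff_vsim circle_point assms by blast
  then have "hsim (centre k) (circle_point k')"
    using hsim_trans circle_point(2)[OF assms(1)] by blast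
  then have "hsim (centre k) (centre k')"
    using hsim_trans hsim_sym circle_point(2)[OF assms(2)] by blast
  then show False using centre_inj assms by blast
qed

lemma inj_on_circle_point: "inj_on circle_point Kpos"
proof (rule inj_onI, rule ccontr)
  fix k k' assume k: "k \<in> Kpos" "k' \<in> Kpos" "circle_point k = circle_point k'" "k \<noteq> k'"
  then show False
    using circle_points_distinct_classes[OF k(1,2,4)] vsim_refl[OF vp circle_point(1)[OF k(1)]] by simp
qed

lemma circle_point_family:
  assumes F: "F \<subseteq> Kpos" "finite F"
  shows "finite (circle_point ` F)" "circle_point ` F \<subseteq> E" "card (circle_point ` F) = card F"
    "\<And>x y. x \<in> circle_point ` F \<Longrightarrow> y \<in> circle_point ` F \<Longrightarrow> x \<noteq> y \<Longrightarrow> \<not> sim x y"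
proof -
  show "finite (circle_point ` F)" using F by simp
  show "circle_point ` F \<subseteq> E" using circle_point(1) F by auto
  show "card (circle_point ` F) = card F"
    by (rule card_image[OF inj_on_subset[OF inj_on_circle_point F(1)]])
  show "\<And>x y. x \<in> circle_point ` F \<Longrightarrow> y \<in> circle_point ` F \<Longrightarrow> x \<noteq> y \<Longrightarrow> \<not> sim x y"
    using circle_points_distinct_classes F(1) by blast
qed

lemma vsim_circle_point:
  assumes y: "y \<in> E" and l: "lm y > 0"
  obtains k where "k \<in> Kpos" "sim (circle_point k) y" "lk k = lm y"
proof -
  have yh: "y \<in> Ehat" using y E_subset_Ehat by auto
  obtain k where k: "k \<in> Kpos" "hsim (centre k) y" "lh y = lk k"
    using obtain_circle[OF yh] lamhat_on_E[OF y] l by auto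
  have "hsim (circle_point k) y" using hsim_trans[OF hsim_sym[OF circle_point(2)[OF k(1)]] k(2)] .
  then have "sim (circle_point k) y" using hsim_iff_vsim circle_point(1)[OF k(1)] y by simp
  then show ?thesis using that k lamhat_on_E[OF y] by simp
qed

lemma lamk_nonneg: assumes k: "k \<ge> 1" shows "0 \<le> lk k"
proof -
  let ?A = "{Min (lm ` set xs) | xs. length xs = k \<and> set xs \<subseteq> E \<and>
        (\<forall>i<k. \<forall>j<k. i \<noteq> j \<longrightarrow> \<not> sim (xs ! i) (xs ! j))}"
  have "t \<le> 1" if t: "t \<in> ?A" for t
  proof -
    obtain xs where xs: "t = Min (lm ` set xs)" "length xs = k" "set xs \<subseteq> E" using t by blast
    then obtain x0 where x0: "x0 \<in> set xs" using k by (cases xs) auto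
    have "t \<le> lm x0" unfolding xs(1) using x0 by (intro Min_le) auto
    also have "\<dots> \<le> 1" using lam_bounds x0 xs(3) by auto
    finally show "t \<le> 1" .
  qed
  then have "bdd_above ({0} \<union> ?A)" by (intro bdd_aboveI[of _ 1]) auto
  then show ?thesis unfolding lamk_def by (intro cSup_upper) auto
qed

lemma finite_resonant_circles:
  assumes a: "a \<noteq> 0" shows "finite {k \<in> Kpos. phase a (lk k) = 1}"
proof (rule ccontr)
  define K where "K = {k \<in> Kpos. phase a (lk k) = 1}"
  assume "infinite {k \<in> Kpos. phase a (lk k) = 1}"
  then have iK: "infinite K" unfolding K_def .
  have lower: "lk k \<ge> 2 * pi / \<bar>a\<bar>" if k: "k \<in> K" for k
  proof -
    obtain n :: int where n: "lk k = of_int n * (2 * pi / a)"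
      using k phase_eq_1_iff[OF a] unfolding K_def by blast
    have pos: "lk k > 0" using k unfolding K_def Kpos_def by auto
    then have "n \<noteq> 0" using n by auto
    then have "1 * (2 * pi / \<bar>a\<bar>) \<le> \<bar>real_of_int n\<bar> * (2 * pi / \<bar>a\<bar>)"
      by (intro mult_right_mono) auto
    also have "\<dots> = \<bar>lk k\<bar>" unfolding n by (simp add: abs_mult)
    also have "\<dots> = lk k" using pos by simp
    finally show ?thesis by simp
  qed
  define N where "N = nat \<lceil>\<bar>a\<bar> / (2 * pi)\<rceil> + 1"
  obtain F where F: "F \<subseteq> K" "finite F" "card F = N" using infinite_arbitrarily_large[OF iK] by blast
  have FK: "F \<subseteq> Kpos" using F unfolding K_def by auto
  note X = circle_point_family[OF FK F(2)]
  have "real N * (2 * pi / \<bar>a\<bar>) = (\<Sum>k\<in>F. 2 * pi / \<bar>a\<bar>)" using F(3) by simp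
  also have "\<dots> \<le> (\<Sum>k\<in>F. lk k)" using lower F(1) by (intro sum_mono) auto
  also have "\<dots> = (\<Sum>k\<in>F. lm (circle_point k))"
    using circle_point(3) FK by (intro sum.cong) auto
  also have "\<dots> = (\<Sum>x\<in>circle_point ` F. lm x)"
    using sum.reindex[OF inj_on_subset[OF inj_on_circle_point FK], of lm] by simp
  also have "\<dots> \<le> 1" by (rule sum_lam_le_1[OF X(1,2,4)])
  finally have "real N * (2 * pi) \<le> \<bar>a\<bar>" using a by (simp add: field_simps)
  moreover have "real N > \<bar>a\<bar> / (2 * pi)" unfolding N_def by linarith
  ultimately show False using pi_gt_zero by (simp add: field_simps)
qed


lemma class_phase_self: "x0 \<in> E \<Longrightarrow> class_phase a x0 x0 = 1"
  unfolding class_phase_def using vsim_refl[OF vp] Delta_self by simp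

lemma eigenvalue_form:
  assumes "is_eigenvalue E Ehat dhat S b" "b \<noteq> 0"
  obtains m k where "m \<noteq> 0" "k \<in> Kpos" "b = 2 * of_real pi * \<i> * of_int m / of_real (lk k)"
proof -
  obtain f x where f: "f \<in> eig b" and x: "x \<in> E" and fx: "f x \<noteq> 0"
    using assms(1) unfolding is_eigenvalue_def by blast
  have L: "lm x > 0" using eigenspace_fixed_point[OF f x] assms(2) fx lam_pos_iff[OF x] by auto
  obtain k where k: "k \<in> Kpos" "lk k = lm x" using vsim_circle_point[OF x L] by metis
  have "exp (b * of_real (lm x)) = 1" using eigenspace_period[OF f x L] fx by simp
  then obtain n :: int where n: "Re b * lm x = 0" "Im b * lm x = of_int (2 * n) * pi"
    unfolding exp_eq_1 by auto
  then have "b = 2 * of_real pi * \<i> * of_int n / of_real (lk k)"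
    using L k(2) by (simp add: complex_eq_iff field_simps)
  moreover have "n \<noteq> 0" using n assms(2) L by (auto simp: complex_eq_iff)
  ultimately show ?thesis using that k(1) by blast
qed

lemma is_eigenvalue_circle:
  assumes m: "m \<noteq> 0" and k: "k \<in> Kpos"
  shows "is_eigenvalue E Ehat dhat S (2 * of_real pi * \<i> * of_int m / of_real (lk k))"
proof -
  define a where "a = 2 * pi * of_int m / lk k"
  have L: "lk k > 0" using k unfolding Kpos_def by simp
  have b: "2 * of_real pi * \<i> * of_int m / of_real (lk k) = \<i> * complex_of_real a"
    unfolding a_def by (simp add: divide_simps)
  have a: "a \<noteq> 0" using m L unfolding a_def by simp
  have "lk k = of_int m * (2 * pi / a)" using L m unfolding a_def by (simp add: field_simps)
  then have "phase a (lk k) = 1" using phase_eq_1_iff[OF a] by blast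
  then have "resonant a (circle_point k)"
    unfolding resonant_def using circle_point(3)[OF k] L by simp
  then have "class_phase a (circle_point k) \<in> eig (\<i> * of_real a)"
    using class_phase_eigenspace circle_point(1)[OF k] by blast
  moreover have "class_phase a (circle_point k) (circle_point k) \<noteq> 0"
    using class_phase_self circle_point(1)[OF k] by simp
  ultimately show ?thesis unfolding is_eigenvalue_def b using circle_point(1)[OF k] by blast
qed

lemma is_eigenvalue_0: "is_eigenvalue E Ehat dhat S 0"
proof -
  have x0: "enum 0 \<in> E" using enum bij_betwE by blast
  then have "class_phase 0 (enum 0) \<in> eig 0"
    using class_phase_eigenspace[of "enum 0" 0] unfolding resonant_def by simp
  moreover have "class_phase 0 (enum 0) (enum 0) \<noteq> 0" using class_phase_self[OF x0] by simp
  ultimately show ?thesis unfolding is_eigenvalue_def using x0 by blast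
qed

lemma eigenvalues_eq:
  "{b. is_eigenvalue E Ehat dhat S b} =
     {0} \<union> {2 * of_real pi * \<i> * of_int m / of_real (lk k) | m k. m \<noteq> 0 \<and> k \<ge> 1 \<and> lk k > 0}"
proof (intro set_eqI iffI)
  fix b assume b: "b \<in> {b. is_eigenvalue E Ehat dhat S b}"
  then show "b \<in> {0} \<union> {2 * of_real pi * \<i> * of_int m / of_real (lk k) | m k. m \<noteq> 0 \<and> k \<ge> 1 \<and> lk k > 0}"
  proof (cases "b = 0")
    case False
    have "is_eigenvalue E Ehat dhat S b" using b by simp
    then obtain m k where mk: "m \<noteq> 0" "k \<in> Kpos" "b = 2 * of_real pi * \<i> * of_int m / of_real (lk k)"
      by (rule eigenvalue_form[OF _ False])
    show ?thesis using mk unfolding Kpos_def by (intro UnI2 CollectI exI[of _ m] exI[of _ k]) simp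
  qed simp
next
  fix b assume "b \<in> {0} \<union> {2 * of_real pi * \<i> * of_int m / of_real (lk k) | m k. m \<noteq> 0 \<and> k \<ge> 1 \<and> lk k > 0}"
  then show "b \<in> {b. is_eigenvalue E Ehat dhat S b}"
    using is_eigenvalue_circle is_eigenvalue_0 unfolding Kpos_def by auto
qed

lemma eigenspace_zero_eq: "eig 0 = {f \<in> FE E. \<forall>x\<in>E. \<forall>y\<in>E. sim x y \<longrightarrow> f x = f y}"
proof -
  have "phase_covariant 0 f \<longleftrightarrow> (\<forall>x\<in>E. \<forall>y\<in>E. sim x y \<longrightarrow> f x = f y)" for f
    unfolding phase_covariant_def by (simp, metis)
  moreover have "resonant_support 0 f" for f
    unfolding resonant_support_def resonant_def by simp
  ultimately show ?thesis using eigenspace_imag_eq[of 0] by simp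
qed

lemma resonant_iff_multiple:
  assumes "a \<noteq> 0" "x \<in> E"
  shows "resonant a x \<longleftrightarrow> lm x \<noteq> 0 \<and> (\<exists>n::int. lm x = of_int n * (2 * pi / a))"
  unfolding resonant_def using phase_eq_1_iff[OF assms(1), of "lm x"] lam_pos_iff[OF assms(2)] assms(1)
  by simp

lemma phase_covariant_iff:
  assumes "resonant_support a f"
  shows "phase_covariant a f \<longleftrightarrow>
    (\<forall>x\<in>E. resonant a x \<longrightarrow> (\<exists>c. \<forall>y\<in>E. sim x y \<longrightarrow> f y = c * phase a (Dl x y)))"
proof
  assume "phase_covariant a f"
  then show "\<forall>x\<in>E. resonant a x \<longrightarrow> (\<exists>c. \<forall>y\<in>E. sim x y \<longrightarrow> f y = c * phase a (Dl x y))"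
    unfolding phase_covariant_def by blast
next
  assume c: "\<forall>x\<in>E. resonant a x \<longrightarrow> (\<exists>c. \<forall>y\<in>E. sim x y \<longrightarrow> f y = c * phase a (Dl x y))"
  show "phase_covariant a f" unfolding phase_covariant_def
  proof (intro ballI impI)
    fix x y assume x: "x \<in> E" and y: "y \<in> E" and xy: "sim x y"
    show "f y = f x * phase a (Dl x y)"
    proof (cases "resonant a x")
      case True
      then obtain c where c: "\<forall>y\<in>E. sim x y \<longrightarrow> f y = c * phase a (Dl x y)" using c x by blast
      then have "f x = c" using x vsim_refl[OF vp x] Delta_self by simp
      then show ?thesis using c y xy by simp
    next
      case False
      then have "f x = 0" "f y = 0"
        using assms resonant_vsim[OF xy] x y unfolding resonant_support_def by auto
      then show ?thesis by simp
    qed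
  qed
qed

lemma eigenspace_imag_eq_classes:
  assumes a: "a \<noteq> 0"
  shows "eig (\<i> * of_real a) =
    {f \<in> FE E.
       (\<forall>x\<in>E. (lm x = 0 \<or> \<not> (\<exists>n::int. lm x = of_int n * (2 * pi / a))) \<longrightarrow> f x = 0) \<and>
       (\<forall>x\<in>E. lm x \<noteq> 0 \<and> (\<exists>n::int. lm x = of_int n * (2 * pi / a)) \<longrightarrow>
          (\<exists>c. \<forall>y\<in>E. sim x y \<longrightarrow> f y = c * phase a (Dl x y)))}"
proof -
  have "resonant_support a f \<longleftrightarrow>
      (\<forall>x\<in>E. (lm x = 0 \<or> \<not> (\<exists>n::int. lm x = of_int n * (2 * pi / a))) \<longrightarrow> f x = 0)" for f
    unfolding resonant_support_def using resonant_iff_multiple[OF a] by blast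
  then show ?thesis
    unfolding eigenspace_imag_eq using phase_covariant_iff resonant_iff_multiple[OF a] by auto
qed

lemma eigenspace_family_dim:
  assumes F: "F \<subseteq> Kpos" "finite F" and res: "\<And>k. k \<in> F \<Longrightarrow> resonant a (circle_point k)"
  shows "\<exists>B\<subseteq>eig (\<i> * of_real a). lin_indep B \<and> card B = card F"
proof -
  have "\<And>x. x \<in> circle_point ` F \<Longrightarrow> resonant a x" using res by blast
  note family = class_phase_family[OF circle_point_family(1,2,4)[OF F] this]
  show ?thesis using family circle_point_family(3)[OF F]
    by (intro exI[of _ "class_phase a ` circle_point ` F"]) simp
qed

lemma dim_eigenspace_zero_if_sums_1:
  assumes "(\<lambda>k. lk (Suc k)) sums 1"
  shows "dim_eq_card (eig 0) {k. k \<ge> 1 \<and> lk k > 0}"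
proof -
  have no_fixed: "{x\<in>Ehat. lh x = 0} = {}"
    using cls[unfolded class_structure_def, THEN conjunct2, THEN conjunct2, THEN conjunct2,
        THEN conjunct2] assms by (rule mp)
  have lam_pos_E: "lm y > 0" if y: "y \<in> E" for y
  proof -
    have "lh y \<noteq> 0" using no_fixed y E_subset_Ehat by blast
    then show ?thesis using lamhat_on_E[OF y] lam_pos_iff[OF y] by simp
  qed
  have "has_dim (eig 0) (card Kpos)" if fin: "finite Kpos"
  proof -
    have "\<forall>y\<in>E. resonant 0 y \<longrightarrow> (\<exists>x\<in>circle_point ` Kpos. sim x y)"
    proof (intro ballI impI)
      fix y assume y: "y \<in> E"
      obtain k where "k \<in> Kpos" "sim (circle_point k) y"
        using vsim_circle_point[OF y lam_pos_E[OF y]] by blast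
      then show "\<exists>x\<in>circle_point ` Kpos. sim x y" by blast
    qed
    moreover have "resonant 0 x" for x unfolding resonant_def by simp
    ultimately have "has_dim (eig (\<i> * of_real 0)) (card (circle_point ` Kpos))"
      by (intro has_dim_eigenspace[OF circle_point_family(1,2,4)[OF subset_refl fin]])
    then show ?thesis using circle_point_family(3)[OF subset_refl fin] by simp
  qed
  moreover have "infinite_dim (eig 0)" if iK: "infinite Kpos"
    unfolding infinite_dim_def
  proof
    fix n
    obtain F where "F \<subseteq> Kpos" "finite F" "card F = n"
      using infinite_arbitrarily_large[OF iK] by blast
    then show "\<exists>B\<subseteq>eig 0. lin_indep B \<and> card B = n"
      using eigenspace_family_dim[of F 0] unfolding resonant_def by simp
  qed
  ultimately show ?thesis unfolding dim_eq_card_def Kpos_def[symmetric] by blast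
qed

lemma infinite_dim_eigenspace_zero:
  assumes "\<exists>s<1. (\<lambda>k. lk (Suc k)) sums s"
  shows "infinite_dim (eig 0)"
  unfolding infinite_dim_def
proof
  fix n
  have "countable {x\<in>Ehat. lh x = 0} \<and> infinite {x\<in>Ehat. lh x = 0}"
    using cls[unfolded class_structure_def, THEN conjunct2, THEN conjunct2, THEN conjunct2,
        THEN conjunct1] assms by (rule mp)
  then obtain F where F: "F \<subseteq> {x\<in>Ehat. lh x = 0}" "finite F" "card F = n"
    using infinite_arbitrarily_large by blast
  have FE: "x \<in> E" "lm x = 0" if "x \<in> F" for x
    using F(1) that lamhat_eq_0_D by auto
  have distinct: "\<not> sim x y" if xy: "x \<in> F" "y \<in> F" "x \<noteq> y" for x y
  proof
    assume "sim x y"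
    then have "y = x" using vsim_lam_zero FE[OF xy(1)] by blast
    then show False using xy(3) by simp
  qed
  have "resonant 0 x" for x unfolding resonant_def by simp
  note family = class_phase_family[OF F(2) _ distinct this]
  show "\<exists>B\<subseteq>eig 0. lin_indep B \<and> card B = n"
    using family FE(1) F(3) by (intro exI[of _ "class_phase 0 ` F"]) auto
qed

lemma has_dim_eigenspace_imag:
  assumes a: "a \<noteq> 0"
  shows "let K = {k. k \<ge> 1 \<and> lk k \<noteq> 0 \<and> (\<exists>n::int. lk k = of_int n * (2 * pi / a))}
         in finite K \<and> has_dim (eig (\<i> * of_real a)) (card K)"
proof -
  define K where "K = {k \<in> Kpos. phase a (lk k) = 1}"
  have K_eq: "{k. k \<ge> 1 \<and> lk k \<noteq> 0 \<and> (\<exists>n::int. lk k = of_int n * (2 * pi / a))} = K"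
  proof -
    have "lk k \<noteq> 0 \<longleftrightarrow> lk k > 0" if "k \<ge> 1" for k using lamk_nonneg[OF that] by auto
    then show ?thesis unfolding K_def Kpos_def using phase_eq_1_iff[OF a] by auto
  qed
  have fin: "finite K" using finite_resonant_circles[OF a] unfolding K_def .
  have KK: "K \<subseteq> Kpos" unfolding K_def by auto
  have res: "resonant a x" if x: "x \<in> circle_point ` K" for x
  proof -
    obtain k where k: "k \<in> Kpos" "phase a (lk k) = 1" "x = circle_point k"
      using x unfolding K_def by blast
    then show ?thesis using circle_point(3)[OF k(1)] unfolding resonant_def Kpos_def by simp
  qed
  have "\<forall>y\<in>E. resonant a y \<longrightarrow> (\<exists>x\<in>circle_point ` K. sim x y)"
  proof (intro ballI impI)
    fix y assume y: "y \<in> E" and "resonant a y"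
    then have l: "lm y > 0" "phase a (lm y) = 1" using a unfolding resonant_def by auto
    obtain k where "k \<in> Kpos" "sim (circle_point k) y" "lk k = lm y"
      using vsim_circle_point[OF y l(1)] by blast
    then show "\<exists>x\<in>circle_point ` K. sim x y"
      using l(2) unfolding K_def by (intro bexI[of _ "circle_point k"]) auto
  qed
  then have "has_dim (eig (\<i> * of_real a)) (card (circle_point ` K))"
    using res by (intro has_dim_eigenspace[OF circle_point_family(1,2,4)[OF KK fin]])
  then have "has_dim (eig (\<i> * of_real a)) (card K)"
    using circle_point_family(3)[OF KK fin] by simp
  then show ?thesis unfolding K_eq Let_def using fin by simp
qed

end

theorem proposition5p5:
  fixes E :: "'a set" and enum :: "nat \<Rightarrow> 'a" and \<sigma> :: "'a set \<Rightarrow> 'a \<Rightarrow> 'a"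
    and Ehat :: "'a set" and dhat :: "'a \<Rightarrow> 'a \<Rightarrow> real" and S :: "real \<Rightarrow> 'a \<Rightarrow> 'a"
  assumes E: "countable E" "infinite E" "bij_betw enum UNIV E"
    and vp: "virtual_perm E \<sigma>"
    and lam_conv: "\<forall>x\<in>E. convergent (lam_seq E enum \<sigma> x)"
    and Delta_conv: "\<forall>x y. vsim E \<sigma> x y \<longrightarrow> convergent (Delta_seq enum \<sigma> x y)"
    and lam_pos: "\<forall>x\<in>E. lam E enum \<sigma> x > 0 \<longleftrightarrow> \<not> vfixed E \<sigma> x"
    and compl: "is_completion E (vdist E enum \<sigma>) Ehat dhat"
    and ext: "extensions_exist E enum \<sigma> Ehat dhat"
    and cls: "class_structure E enum \<sigma> Ehat dhat"
    and flow: "is_flow E enum \<sigma> Ehat dhat S"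
  shows
    "({b. is_eigenvalue E Ehat dhat S b} =
       {0} \<union> {2 * of_real pi * \<i> * of_int m / of_real (lamk E enum \<sigma> k) | m k.
                 m \<noteq> 0 \<and> k \<ge> 1 \<and> lamk E enum \<sigma> k > 0}) \<and>
    (eigenspace E Ehat dhat S 0 =
       {f \<in> FE E. \<forall>x\<in>E. \<forall>y\<in>E. vsim E \<sigma> x y \<longrightarrow> f x = f y}) \<and>
    (\<forall>a::real. a \<noteq> 0 \<longrightarrow>
       eigenspace E Ehat dhat S (\<i> * of_real a) =
       {f \<in> FE E.
          (\<forall>x\<in>E. (lam E enum \<sigma> x = 0 \<or> \<not> (\<exists>n::int. lam E enum \<sigma> x = of_int n * (2 * pi / a)))
                    \<longrightarrow> f x = 0) \<and>
          (\<forall>x\<in>E. lam E enum \<sigma> x \<noteq> 0 \<and> (\<exists>n::int. lam E enum \<sigma> x = of_int n * (2 * pi / a)) \<longrightarrow>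
             (\<exists>c. \<forall>y\<in>E. vsim E \<sigma> x y \<longrightarrow>
                   f y = c * exp (\<i> * of_real (a * Delta enum \<sigma> x y))))}) \<and>
    ((\<lambda>k. lamk E enum \<sigma> (Suc k)) sums 1 \<longrightarrow>
       dim_eq_card (eigenspace E Ehat dhat S 0) {k. k \<ge> 1 \<and> lamk E enum \<sigma> k > 0}) \<and>
    ((\<exists>s<1. (\<lambda>k. lamk E enum \<sigma> (Suc k)) sums s) \<longrightarrow>
       infinite_dim (eigenspace E Ehat dhat S 0)) \<and>
    (\<forall>a::real. a \<noteq> 0 \<longrightarrow>
       (let K = {k. k \<ge> 1 \<and> lamk E enum \<sigma> k \<noteq> 0 \<and>
                    (\<exists>n::int. lamk E enum \<sigma> k = of_int n * (2 * pi / a))}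
        in finite K \<and> has_dim (eigenspace E Ehat dhat S (\<i> * of_real a)) (card K)))"
proof -
  interpret virtual_perm_flow E enum \<sigma> Ehat dhat S
    using E(3) vp lam_conv Delta_conv lam_pos compl ext cls flow by unfold_locales
  show ?thesis
    by (intro conjI allI impI)
      (fact eigenvalues_eq eigenspace_zero_eq eigenspace_imag_eq_classes
        dim_eigenspace_zero_if_sums_1 infinite_dim_eigenspace_zero has_dim_eigenspace_imag)+
qed

end
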